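(* For any Boolean function family $f$ that can be computed by depth-$d$ $\mathsf{TC}^0$ circuits, $f$ can be implemented noncleanly by a circuit family in $\mathsf{A}^{\mathsf{CQ}}_{4d}$ and cleanly by a circuit family in $\mathsf{A}^{\mathsf{CQ}}_{8d}$.
   Context: $\mathsf{TC}^0$ circuits of depth $d$ are polynomial-size classical Boolean circuits with $d$ layers of threshold gates $\mathbf{1}\{\sum_i x_i\ge t\}$ of unbounded fan-in and unbounded fan-out. $\mathsf{QNC}^0$ denotes constant-depth circuits of arbitrary two-qubit gates. $\mathsf{A}^{\mathsf{CQ}}_k$ is the class of circuit families that are a product of $k+1$ circuits alternating between arbitrary-size Clifford circuits and $\mathsf{QNC}^0$ circuits of a fixed constant depth, starting (in order of application) with a Clifford circuit. A unitary $U$ cleanly computes $f$ if $U|x\rangle|b\rangle|0^a\rangle = |x\rangle|f(x)\oplus b\rangle|0^a\rangle$ for all inputs $x$ and bits $b$ (with $a$ polynomially many ancillas); it noncleanly computes $f$ if on input $|x\rangle|0\rangle|0^a\rangle$ it outputs a state of the form $|\psi_x\rangle|f(x)\rangle$ with the designated output qubit equal to $|f(x)\rangle$. *)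

theory Defs
  imports Complex_Main
begin

text \<open>Wires are numbered: wire w < m is input bit x!w, wire m+k is the output of
  gate number k.  A literal is a pair (w, neg): the value of wire w, negated iff neg.
  A gate is (literals, threshold t, layer l); it outputs 1 iff the number of true
  literals among its (distinct) inputs is at least t.\<close>

type_synonym tc_gate = "(nat \<times> bool) list \<times> int \<times> nat"
type_synonym tc_circuit = "tc_gate list \<times> nat"   \<comment> \<open>gates, designated output wire\<close>

definition lit_val :: "bool list \<Rightarrow> nat \<times> bool \<Rightarrow> bool" where
  "lit_val vs lt = (vs ! fst lt \<noteq> snd lt)"

definition gate_val :: "bool list \<Rightarrow> tc_gate \<Rightarrow> bool" where
  "gate_val vs g = (int (length (filter (lit_val vs) (fst g))) \<ge> fst (snd g))"

fun eval_gates :: "bool list \<Rightarrow> tc_gate list \<Rightarrow> bool list" where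
  "eval_gates vs [] = vs"
| "eval_gates vs (g # gs) = eval_gates (vs @ [gate_val vs g]) gs"

definition tc_eval :: "bool list \<Rightarrow> tc_circuit \<Rightarrow> bool" where
  "tc_eval x C = eval_gates x (fst C) ! snd C"

definition gate_layer :: "tc_gate \<Rightarrow> nat" where
  "gate_layer g = snd (snd g)"

definition tc_wf :: "nat \<Rightarrow> nat \<Rightarrow> tc_circuit \<Rightarrow> bool" where
  "tc_wf m d C \<longleftrightarrow>
     snd C < m + length (fst C) \<and>
     (\<forall>k < length (fst C).
        1 \<le> gate_layer (fst C ! k) \<and> gate_layer (fst C ! k) \<le> d \<and>
        distinct (map fst (fst (fst C ! k))) \<and>
        (\<forall>lt \<in> set (fst (fst C ! k)).
           fst lt < m + k \<and>
           (m \<le> fst lt \<longrightarrow> gate_layer (fst C ! (fst lt - m)) < gate_layer (fst C ! k))))"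

definition tc0_depth :: "nat \<Rightarrow> (bool list \<Rightarrow> bool) \<Rightarrow> bool" where
  "tc0_depth d f \<longleftrightarrow>
     (\<exists>c::nat. \<forall>m. \<exists>C. tc_wf m d C \<and> length (fst C) \<le> c * m ^ c + c \<and>
        (\<forall>x. length x = m \<longrightarrow> tc_eval x C = f x))"

text \<open>An operator on N qubits is given by its matrix entries U y x = \<langle>y|U|x\<rangle>,
  indexed by bit strings y, x of length N (qubit i is the i-th list entry).\<close>

type_synonym qop = "bool list \<Rightarrow> bool list \<Rightarrow> complex"
type_synonym qstate = "bool list \<Rightarrow> complex"

definition strs :: "nat \<Rightarrow> bool list set" where
  "strs N = {z. length z = N}"

definition op_id :: qop where
  "op_id y x = (if y = x then 1 else 0)"

definition op_mult :: "nat \<Rightarrow> qop \<Rightarrow> qop \<Rightarrow> qop" where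
  "op_mult N A B y x = (\<Sum>z\<in>strs N. A y z * B z x)"

definition ket :: "bool list \<Rightarrow> qstate" where
  "ket b y = (if y = b then 1 else 0)"

definition apply_op :: "nat \<Rightarrow> qop \<Rightarrow> qstate \<Rightarrow> qstate" where
  "apply_op N U \<psi> y = (if length y = N then (\<Sum>x\<in>strs N. U y x * \<psi> x) else 0)"

definition emb1 :: "nat \<Rightarrow> nat \<Rightarrow> (bool \<Rightarrow> bool \<Rightarrow> complex) \<Rightarrow> qop" where
  "emb1 N i G y x = (if \<forall>k<N. k \<noteq> i \<longrightarrow> y ! k = x ! k then G (y ! i) (x ! i) else 0)"

definition emb2 :: "nat \<Rightarrow> nat \<Rightarrow> nat \<Rightarrow> (bool \<times> bool \<Rightarrow> bool \<times> bool \<Rightarrow> complex) \<Rightarrow> qop" where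
  "emb2 N i j G y x =
     (if \<forall>k<N. k \<noteq> i \<and> k \<noteq> j \<longrightarrow> y ! k = x ! k then G (y ! i, y ! j) (x ! i, x ! j) else 0)"

text \<open>Operator of a sequence of operators, the first one applied first.\<close>
definition seq_op :: "nat \<Rightarrow> qop list \<Rightarrow> qop" where
  "seq_op N Us = foldl (\<lambda>U V. op_mult N V U) op_id Us"

definition unitary2 :: "(bool \<times> bool \<Rightarrow> bool \<times> bool \<Rightarrow> complex) \<Rightarrow> bool" where
  "unitary2 G \<longleftrightarrow> (\<forall>a b. (\<Sum>c\<in>UNIV. cnj (G c a) * G c b) = (if a = b then 1 else 0))"

datatype cliff_gate = Hg nat | Sg nat | CNOTg nat nat

definition H_mat :: "bool \<Rightarrow> bool \<Rightarrow> complex" where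
  "H_mat a b = (if a \<and> b then -1 else 1) / complex_of_real (sqrt 2)"

definition S_mat :: "bool \<Rightarrow> bool \<Rightarrow> complex" where
  "S_mat a b = (if a \<noteq> b then 0 else if a then \<i> else 1)"

definition CNOT_mat :: "bool \<times> bool \<Rightarrow> bool \<times> bool \<Rightarrow> complex" where
  "CNOT_mat y x = (if fst y = fst x \<and> snd y = (snd x \<noteq> fst x) then 1 else 0)"

fun cliff_gate_ok :: "nat \<Rightarrow> cliff_gate \<Rightarrow> bool" where
  "cliff_gate_ok N (Hg i) = (i < N)"
| "cliff_gate_ok N (Sg i) = (i < N)"
| "cliff_gate_ok N (CNOTg i j) = (i < N \<and> j < N \<and> i \<noteq> j)"

fun cliff_gate_op :: "nat \<Rightarrow> cliff_gate \<Rightarrow> qop" where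
  "cliff_gate_op N (Hg i) = emb1 N i H_mat"
| "cliff_gate_op N (Sg i) = emb1 N i S_mat"
| "cliff_gate_op N (CNOTg i j) = emb2 N i j CNOT_mat"

definition clifford_circuit :: "nat \<Rightarrow> qop \<Rightarrow> bool" where
  "clifford_circuit N U \<longleftrightarrow>
     (\<exists>gs. (\<forall>g\<in>set gs. cliff_gate_ok N g) \<and> U = seq_op N (map (cliff_gate_op N) gs))"

definition layer_ok :: "nat \<Rightarrow> (nat \<times> nat \<times> (bool \<times> bool \<Rightarrow> bool \<times> bool \<Rightarrow> complex)) list \<Rightarrow> bool" where
  "layer_ok N L \<longleftrightarrow>
     distinct (concat (map (\<lambda>(i, j, G). [i, j]) L)) \<and>
     (\<forall>(i, j, G)\<in>set L. i < N \<and> j < N \<and> unitary2 G)"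

definition layer_op :: "nat \<Rightarrow> (nat \<times> nat \<times> (bool \<times> bool \<Rightarrow> bool \<times> bool \<Rightarrow> complex)) list \<Rightarrow> qop" where
  "layer_op N L = seq_op N (map (\<lambda>(i, j, G). emb2 N i j G) L)"

definition qnc0_circuit :: "nat \<Rightarrow> nat \<Rightarrow> qop \<Rightarrow> bool" where
  "qnc0_circuit N D U \<longleftrightarrow>
     (\<exists>Ls. length Ls \<le> D \<and> (\<forall>L\<in>set Ls. layer_ok N L) \<and> U = seq_op N (map (layer_op N) Ls))"

definition acq_circuit :: "nat \<Rightarrow> nat \<Rightarrow> nat \<Rightarrow> qop \<Rightarrow> bool" where
  "acq_circuit N k D U \<longleftrightarrow>
     (\<exists>Us. length Us = k + 1 \<and>
        (\<forall>i\<le>k. (even i \<longrightarrow> clifford_circuit N (Us ! i)) \<and>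
                (odd i \<longrightarrow> qnc0_circuit N D (Us ! i))) \<and>
        U = seq_op N Us)"

text \<open>Qubit layout on N = m + 1 + a qubits: input x (qubits 0..m-1), output qubit m,
  ancillas m+1..m+a.\<close>

definition cleanly_computes :: "nat \<Rightarrow> nat \<Rightarrow> qop \<Rightarrow> (bool list \<Rightarrow> bool) \<Rightarrow> bool" where
  "cleanly_computes m a U f \<longleftrightarrow>
     (\<forall>x b. length x = m \<longrightarrow>
        apply_op (m + 1 + a) U (ket (x @ [b] @ replicate a False))
          = ket (x @ [f x \<noteq> b] @ replicate a False))"

definition noncleanly_computes :: "nat \<Rightarrow> nat \<Rightarrow> qop \<Rightarrow> (bool list \<Rightarrow> bool) \<Rightarrow> bool" where
  "noncleanly_computes m a U f \<longleftrightarrow>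
     (\<forall>x. length x = m \<longrightarrow>
        (\<exists>\<psi> :: qstate.
           apply_op (m + 1 + a) U (ket (x @ [False] @ replicate a False))
             = (\<lambda>y. if length y = m + 1 + a \<and> y ! m = f x
                    then \<psi> (take m y @ drop (m + 1) y) else 0)))"

definition cleanly_in_ACQ :: "nat \<Rightarrow> (bool list \<Rightarrow> bool) \<Rightarrow> bool" where
  "cleanly_in_ACQ k f \<longleftrightarrow>
     (\<exists>D c::nat. \<forall>m. \<exists>a U. a \<le> c * m ^ c + c \<and> acq_circuit (m + 1 + a) k D U \<and>
        cleanly_computes m a U f)"

definition noncleanly_in_ACQ :: "nat \<Rightarrow> (bool list \<Rightarrow> bool) \<Rightarrow> bool" where
  "noncleanly_in_ACQ k f \<longleftrightarrow>
     (\<exists>D c::nat. \<forall>m. \<exists>a U. a \<le> c * m ^ c + c \<and> acq_circuit (m + 1 + a) k D U \<and>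
        noncleanly_computes m a U f)"

end

theory Submission
  imports Defs "HOL-Library.Nat_Bijection"
begin

text \<open>
  Each threshold gate is evaluated by phase kickback, keeping the whole state a product state.
  Let the gate have \<open>n\<close> literals, threshold \<open>t\<close> and \<open>s\<close> true literals, and let \<open>n < 2^K\<close>. For each
  candidate count \<open>u\<close> with \<open>t \<le> u \<le> n\<close> and each \<open>j < K\<close>, a register qubit is prepared as
  \<open>H diag(1, e^{i\<pi>(s-u)/2^j}) H |0\<rangle>\<close>, the phase being a sum of two-qubit phases on copies of the
  literals. If \<open>s = u\<close> all registers of \<open>u\<close> are \<open>|0\<rangle>\<close>; otherwise \<open>s - u = 2^j q\<close> with \<open>q\<close> odd and
  \<open>j < K\<close>, and register \<open>j\<close> is \<open>|1\<rangle>\<close>. So on the support of the state exactly one \<open>u\<close> has all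
  registers zero if \<open>s \<ge> t\<close>, and none otherwise, and the phases \<open>(-1)^{o \<and> registers of u all zero}\<close>
  multiply to \<open>(-1)^{o [s \<ge> t]}\<close> on the output qubit \<open>o\<close>, prepared as \<open>H|0\<rangle>\<close>; a final \<open>H\<close> leaves
  \<open>|s \<ge> t\<rangle>\<close>. Each such AND-phase is a signed sum of parity phases, computed by CNOTs into fresh qubits.
  Hence a layer of the threshold circuit costs two layers of diagonal gates separated by Clifford
  circuits, four alternations in all; copying the output and uncomputing doubles this.
\<close>

section \<open>Operators on amplitude functions\<close>

lemma finite_strs[simp]: "finite (strs N)"
proof -
  have "strs N = set (List.n_lists N [False, True])"
    by (auto simp: strs_def set_n_lists)
  then show ?thesis by simp
qed

lemma mem_strs[simp]: "x \<in> strs N \<longleftrightarrow> length x = N"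
  by (simp add: strs_def)

definition restrict_state :: "nat \<Rightarrow> qstate \<Rightarrow> qstate" where
  "restrict_state N \<psi> y = (if length y = N then \<psi> y else 0)"

lemma apply_op_mult: "apply_op N (op_mult N A B) \<psi> = apply_op N A (apply_op N B \<psi>)"
proof (rule ext)
  fix y
  show "apply_op N (op_mult N A B) \<psi> y = apply_op N A (apply_op N B \<psi>) y"
  proof (cases "length y = N")
    case True
    have "apply_op N (op_mult N A B) \<psi> y = (\<Sum>x\<in>strs N. (\<Sum>z\<in>strs N. A y z * B z x) * \<psi> x)"
      using True by (simp add: apply_op_def op_mult_def)
    also have "\<dots> = (\<Sum>x\<in>strs N. \<Sum>z\<in>strs N. A y z * (B z x * \<psi> x))"
      by (simp add: sum_distrib_right mult.assoc)
    also have "\<dots> = (\<Sum>z\<in>strs N. \<Sum>x\<in>strs N. A y z * (B z x * \<psi> x))"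
      by (rule sum.swap)
    also have "\<dots> = apply_op N A (apply_op N B \<psi>) y"
      using True by (auto simp: apply_op_def sum_distrib_left intro!: sum.cong)
    finally show ?thesis .
  qed (simp add: apply_op_def)
qed

lemma apply_op_id: "apply_op N op_id \<psi> = restrict_state N \<psi>"
proof (rule ext)
  fix y
  have "(\<Sum>x\<in>strs N. op_id y x * \<psi> x) = (\<Sum>x\<in>strs N. if y = x then \<psi> x else 0)"
    by (rule sum.cong) (auto simp: op_id_def)
  then show "apply_op N op_id \<psi> y = restrict_state N \<psi> y"
    by (simp add: apply_op_def restrict_state_def)
qed

definition run_ops :: "nat \<Rightarrow> qop list \<Rightarrow> qstate \<Rightarrow> qstate" where
  "run_ops N Ops \<psi> = foldl (\<lambda>\<psi> U. apply_op N U \<psi>) \<psi> Ops"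

lemma run_ops_Nil[simp]: "run_ops N [] \<psi> = \<psi>" by (simp add: run_ops_def)
lemma run_ops_Cons[simp]: "run_ops N (U # Ops) \<psi> = run_ops N Ops (apply_op N U \<psi>)" by (simp add: run_ops_def)

lemma apply_foldl_op_mult:
  "apply_op N (foldl (\<lambda>A B. op_mult N B A) U0 Ops) \<psi> = run_ops N Ops (apply_op N U0 \<psi>)"
  by (induction Ops arbitrary: U0) (simp_all add: apply_op_mult)

lemma apply_seq_op: "apply_op N (seq_op N Ops) \<psi> = run_ops N Ops (restrict_state N \<psi>)"
  by (simp add: seq_op_def apply_foldl_op_mult apply_op_id)

lemma sum_strs_reindex:
  fixes h :: "'a::finite \<Rightarrow> bool list"
  assumes "inj h" "range h \<subseteq> strs N" "\<And>x. length x = N \<Longrightarrow> x \<notin> range h \<Longrightarrow> F x = 0"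
  shows "(\<Sum>x\<in>strs N. F x) = (\<Sum>a\<in>UNIV. F (h a))"
proof -
  have "(\<Sum>x\<in>strs N. F x) = (\<Sum>x\<in>range h. F x)"
    by (rule sum.mono_neutral_right) (use assms in auto)
  also have "\<dots> = (\<Sum>a\<in>UNIV. F (h a))"
    using sum.reindex[of h UNIV F] assms(1) by simp
  finally show ?thesis .
qed

lemma apply_emb2:
  assumes ij: "i < N" "j < N" "i \<noteq> j" and y: "length y = N"
  shows "apply_op N (emb2 N i j G) \<psi> y =
           (\<Sum>ab\<in>UNIV. G (y!i, y!j) ab * \<psi> (y[i := fst ab, j := snd ab]))"
proof -
  define h where "h ab = y[i := fst ab, j := snd ab]" for ab :: "bool \<times> bool"
  have inj_h: "inj h"
  proof (rule injI)
    fix a b assume "h a = h b"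
    then have "h a ! i = h b ! i" "h a ! j = h b ! j" by auto
    then show "a = b" using ij y by (auto simp: h_def prod_eq_iff nth_list_update)
  qed
  have outside: "emb2 N i j G y x * \<psi> x = 0" if x: "length x = N" "x \<notin> range h" for x
  proof -
    have disagree: "\<not> (\<forall>k<N. k \<noteq> i \<and> k \<noteq> j \<longrightarrow> y ! k = x ! k)"
    proof
      assume agree: "\<forall>k<N. k \<noteq> i \<and> k \<noteq> j \<longrightarrow> y ! k = x ! k"
      have "x = h (x!i, x!j)"
      proof (rule nth_equalityI)
        fix k assume "k < length x"
        then show "x ! k = h (x!i, x!j) ! k"
          using agree x(1) y ij by (cases "k = i"; cases "k = j") (auto simp: h_def)
      qed (use x(1) y in \<open>simp add: h_def\<close>)
      then show False using x(2) by blast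
    qed
    then show ?thesis by (simp only: emb2_def if_not_P[OF disagree] if_False mult_zero_left)
  qed
  have "(\<Sum>x\<in>strs N. emb2 N i j G y x * \<psi> x) = (\<Sum>ab\<in>UNIV. emb2 N i j G y (h ab) * \<psi> (h ab))"
    by (rule sum_strs_reindex[OF inj_h _ outside]) (use y in \<open>auto simp: h_def\<close>)
  then show ?thesis
    using ij y by (simp add: apply_op_def emb2_def h_def nth_list_update)
qed

lemma apply_emb1:
  assumes i: "i < N" and y: "length y = N"
  shows "apply_op N (emb1 N i G) \<psi> y = (\<Sum>b\<in>UNIV. G (y!i) b * \<psi> (y[i := b]))"
proof -
  define h where "h b = y[i := b]" for b :: bool
  have inj_h: "inj h"
  proof (rule injI)
    fix a b assume "h a = h b"
    then have "h a ! i = h b ! i" by auto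
    then show "a = b" using i y by (auto simp: h_def)
  qed
  have outside: "emb1 N i G y x * \<psi> x = 0" if x: "length x = N" "x \<notin> range h" for x
  proof -
    have disagree: "\<not> (\<forall>k<N. k \<noteq> i \<longrightarrow> y ! k = x ! k)"
    proof
      assume agree: "\<forall>k<N. k \<noteq> i \<longrightarrow> y ! k = x ! k"
      have "x = h (x!i)"
      proof (rule nth_equalityI)
        fix k assume "k < length x"
        then show "x ! k = h (x!i) ! k"
          using agree x(1) y i by (cases "k = i") (auto simp: h_def)
      qed (use x(1) y in \<open>simp add: h_def\<close>)
      then show False using x(2) by blast
    qed
    then show ?thesis by (simp only: emb1_def if_not_P[OF disagree] if_False mult_zero_left)
  qed
  have "(\<Sum>x\<in>strs N. emb1 N i G y x * \<psi> x) = (\<Sum>b\<in>UNIV. emb1 N i G y (h b) * \<psi> (h b))"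
    by (rule sum_strs_reindex[OF inj_h _ outside]) (use y in \<open>auto simp: h_def\<close>)
  then show ?thesis
    using i y by (simp add: apply_op_def emb1_def h_def nth_list_update)
qed

section \<open>Gates and their action on amplitudes\<close>

datatype gate = Had nat | CX nat nat | Diag nat nat "bool \<Rightarrow> bool \<Rightarrow> real"

definition diag_mat :: "(bool \<Rightarrow> bool \<Rightarrow> real) \<Rightarrow> bool \<times> bool \<Rightarrow> bool \<times> bool \<Rightarrow> complex" where
  "diag_mat f a b = (if a = b then cis (f (fst a) (snd a)) else 0)"

fun gate_op :: "nat \<Rightarrow> gate \<Rightarrow> qop" where
  "gate_op N (Had q) = emb1 N q H_mat"
| "gate_op N (CX c t) = emb2 N c t CNOT_mat"
| "gate_op N (Diag i j f) = emb2 N i j (diag_mat f)"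

fun gate_ok :: "nat \<Rightarrow> gate \<Rightarrow> bool" where
  "gate_ok N (Had q) = (q < N)"
| "gate_ok N (CX c t) = (c < N \<and> t < N \<and> c \<noteq> t)"
| "gate_ok N (Diag i j f) = (i < N \<and> j < N \<and> i \<noteq> j)"

definition gate_apply :: "nat \<Rightarrow> gate \<Rightarrow> qstate \<Rightarrow> qstate" where
  "gate_apply N g \<psi> = apply_op N (gate_op N g) \<psi>"

lemma gate_apply_len: "length y \<noteq> N \<Longrightarrow> gate_apply N g \<psi> y = 0"
  by (simp add: gate_apply_def apply_op_def)

lemma gate_apply_Had:
  assumes "q < N" "length y = N"
  shows "gate_apply N (Had q) \<psi> y =
     (\<psi> (y[q:=False]) + (if y!q then -1 else 1) * \<psi> (y[q:=True])) / complex_of_real (sqrt 2)"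
  using assms by (simp add: gate_apply_def apply_emb1 UNIV_bool H_mat_def add_divide_distrib)

lemma gate_apply_CX:
  assumes "c < N" "t < N" "c \<noteq> t" "length y = N"
  shows "gate_apply N (CX c t) \<psi> y = \<psi> (y[t := (y!t \<noteq> y!c)])"
proof -
  have "gate_apply N (CX c t) \<psi> y = (\<Sum>ab\<in>UNIV. CNOT_mat (y!c, y!t) ab * \<psi> (y[c := fst ab, t := snd ab]))"
    using assms by (simp add: gate_apply_def apply_emb2)
  also have "\<dots> = (\<Sum>ab\<in>UNIV. if ab = (y!c, y!t \<noteq> y!c) then \<psi> (y[c := fst ab, t := snd ab]) else 0)"
    by (rule sum.cong) (auto simp: CNOT_mat_def)
  also have "\<dots> = \<psi> (y[t := (y!t \<noteq> y!c)])" using assms by (simp add: sum.delta')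
  finally show ?thesis .
qed

lemma gate_apply_Diag:
  assumes "i < N" "j < N" "i \<noteq> j" "length y = N"
  shows "gate_apply N (Diag i j f) \<psi> y = cis (f (y!i) (y!j)) * \<psi> y"
proof -
  have "gate_apply N (Diag i j f) \<psi> y = (\<Sum>ab\<in>UNIV. diag_mat f (y!i, y!j) ab * \<psi> (y[i := fst ab, j := snd ab]))"
    using assms by (simp add: gate_apply_def apply_emb2)
  also have "\<dots> = (\<Sum>ab\<in>UNIV. if ab = (y!i, y!j) then cis (f (y!i) (y!j)) * \<psi> (y[i := fst ab, j := snd ab]) else 0)"
    by (rule sum.cong) (auto simp: diag_mat_def)
  also have "\<dots> = cis (f (y!i) (y!j)) * \<psi> y" using assms by (simp add: sum.delta')
  finally show ?thesis .
qed

definition gates_apply :: "nat \<Rightarrow> gate list \<Rightarrow> qstate \<Rightarrow> qstate" where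
  "gates_apply N gs \<psi> = foldl (\<lambda>\<psi> g. gate_apply N g \<psi>) \<psi> gs"

lemma gates_apply_Nil[simp]: "gates_apply N [] \<psi> = \<psi>" by (simp add: gates_apply_def)
lemma gates_apply_Cons[simp]: "gates_apply N (g # gs) \<psi> = gates_apply N gs (gate_apply N g \<psi>)" by (simp add: gates_apply_def)
lemma gates_apply_append[simp]: "gates_apply N (gs @ hs) \<psi> = gates_apply N hs (gates_apply N gs \<psi>)" by (simp add: gates_apply_def)

lemma run_ops_map_gate_op: "run_ops N (map (gate_op N) gs) \<psi> = gates_apply N gs \<psi>"
  by (induction gs arbitrary: \<psi>) (simp_all add: gate_apply_def)

definition state_on :: "nat \<Rightarrow> qstate \<Rightarrow> bool" where
  "state_on N \<psi> \<longleftrightarrow> (\<forall>y. length y \<noteq> N \<longrightarrow> \<psi> y = 0)"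

lemma state_on_gate_apply: "state_on N (gate_apply N g \<psi>)" by (simp add: state_on_def gate_apply_len)
lemma state_on_gates_apply: "state_on N \<psi> \<Longrightarrow> state_on N (gates_apply N gs \<psi>)"
  by (induction gs arbitrary: \<psi>) (simp_all add: state_on_gate_apply)

section \<open>Product states\<close>

definition prod_state :: "nat \<Rightarrow> (nat \<Rightarrow> bool \<Rightarrow> complex) \<Rightarrow> qstate" where
  "prod_state N \<phi> y = (if length y = N then (\<Prod>i<N. \<phi> i (y!i)) else 0)"

lemma state_on_prod_state[simp]: "state_on N (prod_state N \<phi>)" by (simp add: state_on_def prod_state_def)

lemma prod_state_cong: "(\<And>i. i < N \<Longrightarrow> \<phi> i = \<phi>' i) \<Longrightarrow> prod_state N \<phi> = prod_state N \<phi>'"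
  by (rule ext) (auto simp: prod_state_def intro!: prod.cong)

definition ket1 :: "bool \<Rightarrow> bool \<Rightarrow> complex" where
  "ket1 a b = (if b = a then 1 else 0)"

lemma ket_prod_state: "length z = N \<Longrightarrow> ket z = prod_state N (\<lambda>i. ket1 (z!i))"
proof (rule ext)
  fix y assume z: "length z = N"
  show "ket z y = prod_state N (\<lambda>i. ket1 (z!i)) y"
  proof (cases "y = z")
    case True then show ?thesis using z by (simp add: ket_def prod_state_def ket1_def)
  next
    case False
    show ?thesis
    proof (cases "length y = N")
      case True
      have "\<exists>i<N. y!i \<noteq> z!i"
      proof (rule ccontr)
        assume "\<not> (\<exists>i<N. y!i \<noteq> z!i)"
        then have "y = z" using True z by (intro nth_equalityI) auto
        then show False using False by simp
      qed
      then obtain i where i: "i < N" "y!i \<noteq> z!i" by blast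
      have "(\<Prod>i<N. ket1 (z!i) (y!i)) = 0"
        using i by (intro prod_zero) (auto simp: ket1_def)
      then show ?thesis using False True by (simp add: ket_def prod_state_def)
    qed (use False in \<open>auto simp: ket_def prod_state_def\<close>)
  qed
qed

lemma prod_state_list_update:
  assumes "q < N" "length y = N"
  shows "prod_state N \<phi> (y[q := a]) = \<phi> q a * (\<Prod>i\<in>{..<N}-{q}. \<phi> i (y!i))"
proof -
  have "prod_state N \<phi> (y[q := a]) = (\<Prod>i<N. \<phi> i (y[q:=a]!i))" using assms by (simp add: prod_state_def)
  also have "\<dots> = \<phi> q (y[q:=a]!q) * (\<Prod>i\<in>{..<N}-{q}. \<phi> i (y[q:=a]!i))"
    using assms by (subst prod.remove[of _ q]) auto
  also have "\<dots> = \<phi> q a * (\<Prod>i\<in>{..<N}-{q}. \<phi> i (y!i))"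
    using assms by (auto intro!: prod.cong)
  finally show ?thesis .
qed

lemma prod_state_factor:
  assumes "q < N" "length y = N"
  shows "prod_state N \<phi> y = \<phi> q (y!q) * (\<Prod>i\<in>{..<N}-{q}. \<phi> i (y!i))"
  using prod_state_list_update[OF assms, of \<phi> "y!q"] assms by simp

lemma prod_state_fun_upd:
  assumes "q < N" "length y = N"
  shows "prod_state N (\<phi>(q := v)) y = v (y!q) * (\<Prod>i\<in>{..<N}-{q}. \<phi> i (y!i))"
proof -
  have "(\<Prod>x\<in>{..<N}-{q}. (\<phi>(q := v)) x (y!x)) = (\<Prod>x\<in>{..<N}-{q}. \<phi> x (y!x))"
    by (rule prod.cong) auto
  then show ?thesis using prod_state_factor[OF assms, of "\<phi>(q := v)"] by simp
qed

lemma prod_state_basis_split: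
  assumes q: "q < N" and "\<phi> q = ket1 v"
  shows "\<exists>\<psi>. prod_state N \<phi> = (\<lambda>y. if length y = N \<and> y ! q = v then \<psi> (take q y @ drop (q + 1) y) else 0)"
proof (intro exI ext)
  fix y
  show "prod_state N \<phi> y = (if length y = N \<and> y ! q = v then (\<lambda>w. prod_state N \<phi> (take q w @ [v] @ drop q w)) (take q y @ drop (q + 1) y) else 0)"
  proof (cases "length y = N \<and> y ! q = v")
    case True
    have "take q (take q y @ drop (q + 1) y) @ [v] @ drop q (take q y @ drop (q + 1) y) = take q y @ [y!q] @ drop (Suc q) y"
      using True q by (simp add: min_def)
    also have "\<dots> = y" using q True id_take_nth_drop[of q y] by simp
    finally show ?thesis using True by simp
  next
    case False
    then have "prod_state N \<phi> y = 0"
      using prod_state_factor[OF q, of y \<phi>] assms by (auto simp: ket1_def prod_state_def)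
    then show ?thesis by (simp only: if_not_P[OF False])
  qed
qed

lemma state_on_ket: "length z = N \<Longrightarrow> state_on N (ket z)"
  by (simp add: ket_prod_state)

definition had1 :: "(bool \<Rightarrow> complex) \<Rightarrow> bool \<Rightarrow> complex" where
  "had1 v b = (v False + (if b then -1 else 1) * v True) / complex_of_real (sqrt 2)"

lemma prod_state_Had:
  assumes q: "q < N"
  shows "gate_apply N (Had q) (prod_state N \<phi>) = prod_state N (\<phi>(q := had1 (\<phi> q)))"
proof (rule ext)
  fix y
  show "gate_apply N (Had q) (prod_state N \<phi>) y = prod_state N (\<phi>(q := had1 (\<phi> q))) y"
  proof (cases "length y = N")
    case True
    let ?P = "\<Prod>i\<in>{..<N}-{q}. \<phi> i (y!i)"
    have "gate_apply N (Had q) (prod_state N \<phi>) y = (\<phi> q False * ?P + (if y!q then -1 else 1) * (\<phi> q True * ?P)) / complex_of_real (sqrt 2)"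
      using q True by (simp add: gate_apply_Had prod_state_list_update)
    also have "\<dots> = had1 (\<phi> q) (y!q) * ?P" by (simp add: had1_def algebra_simps add_divide_distrib)
    also have "\<dots> = prod_state N (\<phi>(q := had1 (\<phi> q))) y"
      using prod_state_fun_upd[OF q True] by simp
    finally show ?thesis .
  qed (simp add: gate_apply_len prod_state_def)
qed

lemma prod_state_CX_basis:
  assumes c: "c < N" "t < N" "c \<noteq> t" and cl: "\<phi> c = ket1 a"
  shows "gate_apply N (CX c t) (prod_state N \<phi>) = prod_state N (\<phi>(t := (\<lambda>b. \<phi> t (b \<noteq> a))))"
proof (rule ext)
  fix y
  show "gate_apply N (CX c t) (prod_state N \<phi>) y = prod_state N (\<phi>(t := (\<lambda>b. \<phi> t (b \<noteq> a)))) y"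
  proof (cases "length y = N")
    case True
    show ?thesis
    proof (cases "y!c = a")
      case yc: True
      have "gate_apply N (CX c t) (prod_state N \<phi>) y = \<phi> t (y!t \<noteq> a) * (\<Prod>i\<in>{..<N}-{t}. \<phi> i (y!i))"
        using c True yc by (simp add: gate_apply_CX prod_state_list_update)
      also have "\<dots> = prod_state N (\<phi>(t := (\<lambda>b. \<phi> t (b \<noteq> a)))) y"
        using prod_state_fun_upd[OF c(2) True] by simp
      finally show ?thesis .
    next
      case yc: False
      have l: "length (y[t := (y!t \<noteq> y!c)]) = N" using True by simp
      have "gate_apply N (CX c t) (prod_state N \<phi>) y = prod_state N \<phi> (y[t := (y!t \<noteq> y!c)])"
        using c True by (simp add: gate_apply_CX)
      also have "\<dots> = 0"
        using prod_state_factor[OF c(1) l, of \<phi>] c yc cl by (simp add: ket1_def)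
      also have "\<dots> = prod_state N (\<phi>(t := (\<lambda>b. \<phi> t (b \<noteq> a)))) y"
        using prod_state_factor[OF c(1) True, of "\<phi>(t := (\<lambda>b. \<phi> t (b \<noteq> a)))"] c yc cl by (simp add: ket1_def)
      finally show ?thesis .
    qed
  qed (simp add: gate_apply_len prod_state_def)
qed

lemma prod_state_phase_one:
  assumes q: "q < N"
  shows "cis (f (y!q)) * prod_state N \<phi> y = prod_state N (\<phi>(q := (\<lambda>b. cis (f b) * \<phi> q b))) y"
proof (cases "length y = N")
  case True
  show ?thesis
    using prod_state_factor[OF q True, of \<phi>] prod_state_fun_upd[OF q True, of \<phi> "(\<lambda>b. cis (f b) * \<phi> q b)"]
    by simp
qed (simp add: prod_state_def)

fun mult_phases :: "(nat \<times> (bool \<Rightarrow> real)) list \<Rightarrow> (nat \<Rightarrow> bool \<Rightarrow> complex) \<Rightarrow> nat \<Rightarrow> bool \<Rightarrow> complex" where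
  "mult_phases [] \<phi> = \<phi>"
| "mult_phases ((q,f) # ps) \<phi> = mult_phases ps (\<phi>(q := (\<lambda>b. cis (f b) * \<phi> q b)))"

definition phase_sum :: "(nat \<times> (bool \<Rightarrow> real)) list \<Rightarrow> bool list \<Rightarrow> real" where
  "phase_sum ps y = sum_list (map (\<lambda>(q,f). f (y!q)) ps)"

lemma prod_state_mult_phases:
  assumes "\<forall>p\<in>set ps. fst p < N"
  shows "cis (phase_sum ps y) * prod_state N \<phi> y = prod_state N (mult_phases ps \<phi>) y"
  using assms
proof (induction ps arbitrary: \<phi>)
  case Nil then show ?case by (simp add: phase_sum_def)
next
  case (Cons p ps)
  obtain q f where p: "p = (q,f)" by force
  have "cis (phase_sum (p # ps) y) * prod_state N \<phi> y = cis (phase_sum ps y) * (cis (f (y!q)) * prod_state N \<phi> y)"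
    by (simp add: phase_sum_def p cis_mult[symmetric] algebra_simps)
  also have "\<dots> = cis (phase_sum ps y) * prod_state N (\<phi>(q := (\<lambda>b. cis (f b) * \<phi> q b))) y"
    using Cons.prems p by (simp add: prod_state_phase_one)
  also have "\<dots> = prod_state N (mult_phases (p # ps) \<phi>) y"
    using Cons p by simp
  finally show ?case .
qed

lemma mult_phases_other: "q \<notin> fst ` set ps \<Longrightarrow> mult_phases ps \<phi> q = \<phi> q"
proof (induction ps arbitrary: \<phi>)
  case (Cons p ps)
  then show ?case by (cases p) (auto simp: rev_image_eqI)
qed simp

lemma mult_phases_at: "distinct (map fst ps) \<Longrightarrow> (q, f) \<in> set ps \<Longrightarrow> mult_phases ps \<phi> q = (\<lambda>b. cis (f b) * \<phi> q b)"
proof (induction ps arbitrary: \<phi>)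
  case (Cons p ps \<phi>)
  obtain q' f' where p: "p = (q', f')" by force
  note 2 = Cons[unfolded p]
  show ?case
  proof (cases "q' = q")
    case True
    then have "f' = f" "q \<notin> fst ` set ps" using 2(2,3) by (auto simp: rev_image_eqI)
    then show ?thesis using True p by (simp add: mult_phases_other)
  next
    case False
    then show ?thesis using 2 p by auto
  qed
qed simp

lemma phase_times_prod_state:
  assumes ps: "\<forall>p\<in>set ps. fst p < N"
  and eq: "\<And>y. length y = N \<Longrightarrow> prod_state N \<phi> y \<noteq> 0 \<Longrightarrow> cis (\<Phi> y) = cis (phase_sum ps y)"
  shows "(\<lambda>y. cis (\<Phi> y) * prod_state N \<phi> y) = prod_state N (mult_phases ps \<phi>)"
proof (rule ext)
  fix y
  show "cis (\<Phi> y) * prod_state N \<phi> y = prod_state N (mult_phases ps \<phi>) y"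
  proof (cases "length y = N \<and> prod_state N \<phi> y \<noteq> 0")
    case True
    then show ?thesis using eq prod_state_mult_phases[OF ps] by metis
  next
    case False
    then have "prod_state N \<phi> y = 0" by (auto simp: prod_state_def)
    then show ?thesis using prod_state_mult_phases[OF ps, of y \<phi>] by simp
  qed
qed

lemma prod_state_nonzero_factor:
  assumes "prod_state N \<phi> y \<noteq> 0" "length y = N" "q < N"
  shows "\<phi> q (y!q) \<noteq> 0"
  using assms prod_state_factor[OF assms(3,2), of \<phi>] by auto

lemma prod_state_basis_factor:
  assumes "prod_state N \<phi> y \<noteq> 0" "length y = N" "q < N" "\<phi> q = ket1 v"
  shows "y!q = v"
  using prod_state_nonzero_factor[OF assms(1-3)] assms(4) by (auto simp: ket1_def split: if_splits)

definition had_on :: "nat list \<Rightarrow> (nat \<Rightarrow> bool \<Rightarrow> complex) \<Rightarrow> nat \<Rightarrow> bool \<Rightarrow> complex" where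
  "had_on qs \<phi> q = (if q \<in> set qs then had1 (\<phi> q) else \<phi> q)"

lemma gates_apply_Hads:
  assumes "distinct qs" "\<forall>q\<in>set qs. q < N"
  shows "gates_apply N (map Had qs) (prod_state N \<phi>) = prod_state N (had_on qs \<phi>)"
  using assms
proof (induction qs arbitrary: \<phi>)
  case (Cons q qs)
  have "gates_apply N (map Had (q # qs)) (prod_state N \<phi>) = prod_state N (had_on qs (\<phi>(q := had1 (\<phi> q))))"
    using Cons by (simp add: prod_state_Had)
  also have "had_on qs (\<phi>(q := had1 (\<phi> q))) = had_on (q # qs) \<phi>"
    using Cons.prems by (auto simp: had_on_def)
  finally show ?case .
qed (simp add: had_on_def[abs_def])

lemma sqrt2_sq: "complex_of_real (sqrt 2) * complex_of_real (sqrt 2) = 2"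
proof -
  have "complex_of_real (sqrt 2) * complex_of_real (sqrt 2) = complex_of_real (sqrt 2 * sqrt 2)"
    by (simp only: of_real_mult)
  also have "sqrt 2 * sqrt 2 = (2::real)" by simp
  finally show ?thesis by simp
qed

lemma had1_ket0: "had1 (ket1 False) = (\<lambda>b. 1 / complex_of_real (sqrt 2))"
  by (auto simp: had1_def ket1_def intro!: ext)

lemma had1_eval: "had1 (\<lambda>b. (if b then B else A) / complex_of_real (sqrt 2)) = (\<lambda>b. (A + (if b then -1 else 1) * B) / 2)"
proof (rule ext)
  fix b
  have s: "complex_of_real (sqrt 2) \<noteq> 0" by simp
  show "had1 (\<lambda>b. (if b then B else A) / complex_of_real (sqrt 2)) b = (A + (if b then -1 else 1) * B) / 2"
    unfolding had1_def using s sqrt2_sq by (simp add: field_simps)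
qed

definition reg_factor :: "real \<Rightarrow> bool \<Rightarrow> complex" where
  "reg_factor \<alpha> b = (if b then (1 - cis \<alpha>) / 2 else (1 + cis \<alpha>) / 2)"

lemma had_phase_had_ket0:
  "had1 (\<lambda>b. cis (if b then \<alpha> else 0) * had1 (ket1 False) b) = reg_factor \<alpha>"
proof -
  have "(\<lambda>b. cis (if b then \<alpha> else 0) * had1 (ket1 False) b) = (\<lambda>b. (if b then cis \<alpha> else 1) / complex_of_real (sqrt 2))"
    by (auto simp: had1_ket0 intro!: ext)
  then show ?thesis by (auto simp: had1_eval reg_factor_def intro!: ext)
qed

lemma had_kick_had_ket0:
  "had1 (\<lambda>b. cis (if b \<and> g then pi else 0) * had1 (ket1 False) b) = ket1 g"
proof -
  have "(\<lambda>b. cis (if b \<and> g then pi else 0) * had1 (ket1 False) b) = (\<lambda>b. (if b then (if g then -1 else 1) else 1) / complex_of_real (sqrt 2))"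
    by (auto simp: had1_ket0 intro!: ext)
  then show ?thesis by (auto simp: had1_eval ket1_def intro!: ext)
qed

section \<open>CNOT networks and grouped diagonal layers\<close>

definition cnot_sim :: "(nat \<times> nat) list \<Rightarrow> bool list \<Rightarrow> bool list" where
  "cnot_sim cs y = foldl (\<lambda>y (c,t). y[t := (y!t \<noteq> y!c)]) y cs"

lemma cnot_sim_Nil[simp]: "cnot_sim [] y = y" by (simp add: cnot_sim_def)
lemma cnot_sim_Cons[simp]: "cnot_sim ((c,t) # cs) y = cnot_sim cs (y[t := (y!t \<noteq> y!c)])" by (simp add: cnot_sim_def)
lemma cnot_sim_append[simp]: "cnot_sim (cs @ ds) y = cnot_sim ds (cnot_sim cs y)" by (simp add: cnot_sim_def)
lemma cnot_sim_len[simp]: "length (cnot_sim cs y) = length y"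
  by (induction cs arbitrary: y) (auto simp: cnot_sim_def)

definition cnots_ok :: "nat \<Rightarrow> (nat \<times> nat) list \<Rightarrow> bool" where
  "cnots_ok N cs \<longleftrightarrow> (\<forall>(c,t)\<in>set cs. c < N \<and> t < N \<and> c \<noteq> t)"

lemma cnot_sim_inv:
  assumes "cnots_ok N cs" "length y = N"
  shows "cnot_sim (rev cs) (cnot_sim cs y) = y"
  using assms
proof (induction cs arbitrary: y)
  case (Cons p cs)
  obtain c t where p: "p = (c,t)" by force
  have ok: "cnots_ok N cs" "c < N" "t < N" "c \<noteq> t" using Cons.prems p by (auto simp: cnots_ok_def)
  have "cnot_sim (rev (p # cs)) (cnot_sim (p # cs) y) = cnot_sim [(c,t)] (cnot_sim (rev cs) (cnot_sim cs (y[t := (y!t \<noteq> y!c)])))"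
    by (simp add: p)
  also have "\<dots> = cnot_sim [(c,t)] (y[t := (y!t \<noteq> y!c)])" using Cons.IH[OF ok(1)] Cons.prems by simp
  also have "\<dots> = y[t := ((y!t \<noteq> y!c) \<noteq> y!c)]" using ok Cons.prems by (simp add: list_update_overwrite)
  also have "((y!t \<noteq> y!c) \<noteq> y!c) = y!t" by auto
  finally show ?case using ok Cons.prems by simp
qed simp

definition cx_gate :: "nat \<times> nat \<Rightarrow> gate" where "cx_gate p = CX (fst p) (snd p)"
definition diag_gate :: "nat \<times> nat \<times> (bool \<Rightarrow> bool \<Rightarrow> real) \<Rightarrow> gate" where
  "diag_gate p = Diag (fst p) (fst (snd p)) (snd (snd p))"

definition diags_ok :: "nat \<Rightarrow> (nat \<times> nat \<times> (bool \<Rightarrow> bool \<Rightarrow> real)) list \<Rightarrow> bool" where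
  "diags_ok N L \<longleftrightarrow> (\<forall>(i,j,f)\<in>set L. i < N \<and> j < N \<and> i \<noteq> j)"

definition diag_phase :: "(nat \<times> nat \<times> (bool \<Rightarrow> bool \<Rightarrow> real)) list \<Rightarrow> bool list \<Rightarrow> real" where
  "diag_phase L y = sum_list (map (\<lambda>(i,j,f). f (y!i) (y!j)) L)"

lemma gates_apply_cnots:
  assumes "cnots_ok N cs" "length y = N"
  shows "gates_apply N (map cx_gate cs) \<psi> y = \<psi> (cnot_sim (rev cs) y)"
  using assms
proof (induction cs arbitrary: y rule: rev_induct)
  case (snoc p cs)
  obtain c t where p: "p = (c,t)" by force
  have ok: "cnots_ok N cs" "c < N" "t < N" "c \<noteq> t" using snoc.prems p by (auto simp: cnots_ok_def)
  show ?case using snoc.IH[OF ok(1)] ok snoc.prems by (simp add: p cx_gate_def gate_apply_CX)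
qed simp

lemma gates_apply_diags:
  assumes "diags_ok N L" "length y = N"
  shows "gates_apply N (map diag_gate L) \<psi> y = cis (diag_phase L y) * \<psi> y"
  using assms
proof (induction L arbitrary: y rule: rev_induct)
  case (snoc p L)
  obtain i j f where p: "p = (i,j,f)" by (cases p) auto
  have ok: "diags_ok N L" "i < N" "j < N" "i \<noteq> j" using snoc.prems p by (auto simp: diags_ok_def)
  show ?case using snoc.IH[OF ok(1)] ok snoc.prems
    by (simp add: p diag_gate_def gate_apply_Diag diag_phase_def cis_mult[symmetric] algebra_simps)
qed (simp add: diag_phase_def)

definition conj_diag :: "(nat \<times> nat) list \<Rightarrow> (nat \<times> nat \<times> (bool \<Rightarrow> bool \<Rightarrow> real)) list \<Rightarrow> gate list" where
  "conj_diag cs L = map cx_gate cs @ map diag_gate L @ map cx_gate (rev cs)"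

lemma gates_apply_conj_diag:
  assumes cs: "cnots_ok N cs" and L: "diags_ok N L" and r: "state_on N \<psi>"
  shows "gates_apply N (conj_diag cs L) \<psi> = (\<lambda>y. cis (diag_phase L (cnot_sim cs y)) * \<psi> y)"
proof (rule ext)
  fix y
  show "gates_apply N (conj_diag cs L) \<psi> y = cis (diag_phase L (cnot_sim cs y)) * \<psi> y"
  proof (cases "length y = N")
    case True
    have cs': "cnots_ok N (rev cs)" using cs by (simp add: cnots_ok_def)
    have "gates_apply N (conj_diag cs L) \<psi> y
        = gates_apply N (map cx_gate (rev cs)) (gates_apply N (map diag_gate L) (gates_apply N (map cx_gate cs) \<psi>)) y"
      by (simp add: conj_diag_def)
    also have "\<dots> = gates_apply N (map diag_gate L) (gates_apply N (map cx_gate cs) \<psi>) (cnot_sim cs y)"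
      using gates_apply_cnots[OF cs' True] by simp
    also have "\<dots> = cis (diag_phase L (cnot_sim cs y)) * gates_apply N (map cx_gate cs) \<psi> (cnot_sim cs y)"
      using gates_apply_diags[OF L] True by simp
    also have "\<dots> = cis (diag_phase L (cnot_sim cs y)) * \<psi> y"
      using gates_apply_cnots[OF cs, of "cnot_sim cs y"] cnot_sim_inv[OF cs True] True by simp
    finally show ?thesis .
  next
    case False
    have "state_on N (gates_apply N (conj_diag cs L) \<psi>)" using state_on_gates_apply[OF r] .
    then show ?thesis using False r by (simp add: state_on_def)
  qed
qed

lemma conj_diag_prod_state:
  assumes cs: "cnots_ok N cs" and L: "diags_ok N L" and ps: "\<forall>p\<in>set ps. fst p < N"
    and eq: "\<And>y. length y = N \<Longrightarrow> prod_state N \<phi> y \<noteq> 0 \<Longrightarrow> diag_phase L (cnot_sim cs y) = phase_sum ps y"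
  shows "gates_apply N (conj_diag cs L) (prod_state N \<phi>) = prod_state N (mult_phases ps \<phi>)"
  unfolding gates_apply_conj_diag[OF cs L state_on_prod_state] using eq by (intro phase_times_prod_state[OF ps]) simp

definition cnot_count :: "(nat \<times> nat) list \<Rightarrow> bool list \<Rightarrow> nat \<Rightarrow> nat" where
  "cnot_count cs y q = length (filter (\<lambda>(c,t). t = q \<and> y!c) cs)"

lemma cnot_sim_nth_parity:
  assumes "\<forall>(c,t)\<in>set cs. c \<notin> snd ` set cs \<and> t < length y" "q < length y"
  shows "cnot_sim cs y ! q = (y!q \<noteq> odd (cnot_count cs y q))"
  using assms
proof (induction cs arbitrary: y)
  case Nil then show ?case by (simp add: cnot_count_def)
next
  case (Cons p cs)
  obtain c t where p: "p = (c,t)" by force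
  let ?y = "y[t := (y!t \<noteq> y!c)]"
  have ct: "c \<noteq> t" "t < length y" using Cons.prems p by auto
  have h: "\<forall>(c,t)\<in>set cs. c \<notin> snd ` set cs \<and> t < length ?y" using Cons.prems p by auto
  have ctl_not_t: "\<forall>(c',t')\<in>set cs. c' \<noteq> t" using Cons.prems p by (force simp: rev_image_eqI)
  have cc: "cnot_count cs ?y q = cnot_count cs y q"
    unfolding cnot_count_def using ctl_not_t by (intro arg_cong[where f=length] filter_cong) auto
  have "cnot_sim (p # cs) y ! q = (?y ! q \<noteq> odd (cnot_count cs y q))"
    using Cons.IH[OF h] Cons.prems cc by (simp add: p)
  moreover have "cnot_count (p # cs) y q = (if t = q \<and> y!c then Suc (cnot_count cs y q) else cnot_count cs y q)"
    by (simp add: cnot_count_def p)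
  ultimately show ?case using ct Cons.prems by (auto simp: nth_list_update)
qed

lemma cnot_count_alt: "cnot_count cs y t = length (filter (\<lambda>p. y ! fst p) (filter (\<lambda>p. snd p = t) cs))"
  by (simp add: cnot_count_def filter_filter case_prod_unfold conj_commute)

section \<open>Arithmetic facts behind the phase computations\<close>

lemma two_adic:
  fixes z :: int
  assumes "z \<noteq> 0"
  shows "\<exists>j q. z = 2^j * q \<and> odd q \<and> 2^j \<le> \<bar>z\<bar>"
  using assms
proof (induction "nat \<bar>z\<bar>" arbitrary: z rule: less_induct)
  case less
  show ?case
  proof (cases "odd z")
    case True
    then show ?thesis using less.prems by (intro exI[of _ 0] exI[of _ z]) auto
  next
    case False
    then obtain z' where z': "z = 2 * z'" by auto
    then have "z' \<noteq> 0" "nat \<bar>z'\<bar> < nat \<bar>z\<bar>" using less.prems by auto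
    then obtain j q where "z' = 2^j * q" "odd q" "2^j \<le> \<bar>z'\<bar>" using less.hyps by blast
    then show ?thesis using z' by (intro exI[of _ "Suc j"] exI[of _ q]) (auto simp: abs_mult)
  qed
qed

lemma cis_pi_odd:
  fixes q :: int
  assumes "odd q"
  shows "cis (pi * of_int q) = -1"
proof -
  obtain r where r: "q = 2 * r + 1" using assms oddE by blast
  have "pi * of_int q = 2 * pi * of_int r + pi" by (simp add: r algebra_simps)
  then have "cis (pi * of_int q) = cis (2 * pi * of_int r + pi)" by simp
  also have "\<dots> = cis (2 * pi * of_int r) * cis pi" by (simp only: cis_mult)
  also have "cis (2 * pi * of_int r) = 1" by (rule cis_multiple_2pi) simp
  finally show ?thesis by simp
qed

lemma strs_Suc_snoc: "(\<lambda>(M, b). M @ [b]) ` (strs r \<times> UNIV) = strs (Suc r)"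
proof
  show "(\<lambda>(M, b). M @ [b]) ` (strs r \<times> UNIV) \<subseteq> strs (Suc r)" by auto
  show "strs (Suc r) \<subseteq> (\<lambda>(M, b). M @ [b]) ` (strs r \<times> UNIV)"
  proof
    fix M assume "M \<in> strs (Suc r)"
    then have "M = (\<lambda>(M, b). M @ [b]) (butlast M, last M)" "butlast M \<in> strs r"
      by auto (metis append_butlast_last_id list.size(3) nat.distinct(1))
    then show "M \<in> (\<lambda>(M, b). M @ [b]) ` (strs r \<times> UNIV)" by blast
  qed
qed

lemma sum_strs_prod:
  "(\<Sum>M\<in>strs r. \<Prod>i<r. g i (M!i)) = (\<Prod>i<r. g i False + g i True :: 'a :: comm_ring_1)"
proof (induction r)
  case 0
  have "strs 0 = {[]}" by (auto simp: strs_def)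
  then show ?case by simp
next
  case (Suc r)
  define h where "h = (\<lambda>(M :: bool list, b :: bool). M @ [b])"
  have inj: "inj_on h (strs r \<times> UNIV)"
    by (auto simp: inj_on_def h_def)
  have "(\<Sum>M\<in>strs (Suc r). \<Prod>i<Suc r. g i (M!i)) = (\<Sum>p\<in>strs r \<times> UNIV. \<Prod>i<Suc r. g i (h p ! i))"
    by (subst strs_Suc_snoc[symmetric, folded h_def], subst sum.reindex[OF inj]) simp
  also have "\<dots> = (\<Sum>p\<in>strs r \<times> UNIV. (\<Prod>i<r. g i (fst p ! i)) * g r (snd p))"
  proof (rule sum.cong)
    fix p assume "p \<in> strs r \<times> (UNIV :: bool set)"
    then obtain M b where p: "p = (M, b)" "length M = r" by auto
    have "(\<Prod>i<r. g i (h p ! i)) = (\<Prod>i<r. g i (M ! i))"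
      using p by (intro prod.cong) (auto simp: h_def nth_append)
    then show "(\<Prod>i<Suc r. g i (h p ! i)) = (\<Prod>i<r. g i (fst p ! i)) * g r (snd p)"
      using p by (simp add: h_def nth_append)
  qed simp
  also have "\<dots> = (\<Sum>M\<in>strs r. \<Sum>b\<in>UNIV. (\<Prod>i<r. g i (M ! i)) * g r b)"
    by (simp add: sum.cartesian_product case_prod_unfold)
  also have "\<dots> = (\<Sum>M\<in>strs r. (\<Prod>i<r. g i (M ! i))) * (g r False + g r True)"
    by (simp add: UNIV_bool sum.distrib sum_distrib_right[symmetric] sum_distrib_left[symmetric])
  also have "\<dots> = (\<Prod>i<Suc r. g i False + g i True)" using Suc by simp
  finally show ?case .
qed

lemma neg_one_power_card:
  "(-1::real) ^ card {i. i < (r::nat) \<and> P i} = (\<Prod>i<r. if P i then -1 else 1)"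
proof -
  have "(\<Prod>i<r. if P i then -1 else (1::real)) = (\<Prod>i\<in>{..<r} \<inter> {i. P i}. -1) * (\<Prod>i\<in>{..<r} \<inter> - {i. P i}. 1)"
    by (subst prod.If_cases) auto
  also have "{..<r} \<inter> {i. P i} = {i. i < r \<and> P i}" by auto
  finally show ?thesis by simp
qed

lemma sum_strs_neg_one_power_card:
  assumes "r \<ge> 1"
  shows "(\<Sum>M\<in>strs r. (-1::real) ^ card {i. i < r \<and> M!i}) = 0"
proof -
  have "(\<Sum>M\<in>strs r. (-1::real) ^ card {i. i < r \<and> M!i}) = (\<Sum>M\<in>strs r. \<Prod>i<r. if M!i then -1 else 1)"
    by (simp add: neg_one_power_card)
  also have "\<dots> = (\<Prod>i<r. (1::real) + -1)"
    using sum_strs_prod[where r=r and g="\<lambda>i b. if b then -1 else (1::real)"] by simp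
  also have "\<dots> = 0" using assms by simp
  finally show ?thesis .
qed

lemma sum_strs_neg_one_power_card_and:
  "(\<Sum>M\<in>strs r. (-1::real) ^ card {i. i < r \<and> M!i} * (-1) ^ card {i. i < r \<and> M!i \<and> bb i})
      = 2 ^ r * (if \<forall>i<r. bb i then 1 else 0)"
proof -
  have "(\<Sum>M\<in>strs r. (-1::real) ^ card {i. i < r \<and> M!i} * (-1) ^ card {i. i < r \<and> M!i \<and> bb i})
     = (\<Sum>M\<in>strs r. \<Prod>i<r. if M!i then (if bb i then 1 else -1) else 1)"
    by (intro sum.cong refl) (auto simp: neg_one_power_card prod.distrib[symmetric] intro!: prod.cong)
  also have "\<dots> = (\<Prod>i<r. (1::real) + (if bb i then 1 else -1))"
    using sum_strs_prod[where r=r and g="\<lambda>i b. if b then (if bb i then 1 else -1) else (1::real)"] by simp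
  also have "\<dots> = (\<Prod>i<r. if bb i then 2 else 0)" by (intro prod.cong) auto
  also have "\<dots> = 2 ^ r * (if \<forall>i<r. bb i then 1 else 0)"
    by (auto intro: prod_zero)
  finally show ?thesis .
qed

lemma parity_sum_and:
  assumes "r \<ge> 1"
  shows "(\<Sum>M\<in>strs r. (-1::real) ^ (card {i. i < r \<and> M!i} + 1) *
            (if odd (card {i. i < r \<and> M!i \<and> bb i}) then 1 else 0))
         = 2 ^ (r - 1) * (if \<forall>i<r. bb i then 1 else 0)"
proof -
  have odd_ind: "(if odd k then 1 else 0) = (1 - (-1::real)^k) / 2" for k
    by auto
  have "(\<Sum>M\<in>strs r. (-1::real) ^ (card {i. i < r \<and> M!i} + 1) *
            (if odd (card {i. i < r \<and> M!i \<and> bb i}) then 1 else 0))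
      = ((\<Sum>M\<in>strs r. (-1::real) ^ card {i. i < r \<and> M!i} * (-1) ^ card {i. i < r \<and> M!i \<and> bb i})
          - (\<Sum>M\<in>strs r. (-1) ^ card {i. i < r \<and> M!i})) / 2"
    by (simp add: odd_ind algebra_simps sum_divide_distrib[symmetric] sum_subtractf)
  also have "\<dots> = 2 ^ (r - 1) * (if \<forall>i<r. bb i then 1 else 0)"
    using assms by (cases r) (simp_all add: sum_strs_neg_one_power_card sum_strs_neg_one_power_card_and)
  finally show ?thesis .
qed

lemma distinct_concat_pairs:
  assumes "distinct xs" "\<And>x. x \<in> set xs \<Longrightarrow> distinct (f x)"
  shows "distinct (concat (map (\<lambda>x. map (\<lambda>y. (x, y)) (f x)) xs))"
  using assms
proof (induction xs)
  case (Cons a xs)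
  then show ?case by (auto simp: distinct_map inj_on_def)
qed simp

lemma concat_single:
  assumes "distinct xs" "x0 \<in> set xs" "\<And>x. x \<in> set xs \<Longrightarrow> x \<noteq> x0 \<Longrightarrow> h x = []"
  shows "concat (map h xs) = h x0"
  using assms
proof (induction xs)
  case (Cons a xs)
  show ?case
  proof (cases "a = x0")
    case True
    then have "x0 \<notin> set xs" using Cons.prems by auto
    then have "concat (map h xs) = []" using Cons.prems True by (auto intro!: concat_eq_Nil_conv[THEN iffD2])
    then show ?thesis using True by simp
  next
    case False
    then show ?thesis using Cons by auto
  qed
qed simp

lemma filter_upt_eq: "c < n \<Longrightarrow> filter (\<lambda>c'. c' = c) [0..<n] = [c]"
proof (induction n)
  case (Suc n)
  then show ?case by (cases "c = n") (auto simp: filter_empty_conv)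
qed simp

lemma card_Suc_filter:
  "card {i. i < Suc n \<and> P i} = card {i. i < n \<and> P i} + (if P n then 1 else 0)"
proof -
  have "{i. i < Suc n \<and> P i} = {i. i < n \<and> P i} \<union> (if P n then {n} else {})" by (auto simp: less_Suc_eq)
  then show ?thesis by (auto simp: card_insert_if)
qed

lemma odd_card_xor:
  "odd (card {i. i < (n::nat) \<and> M i \<and> (P i \<noteq> Q i)}) =
     (odd (card {i. i < n \<and> M i \<and> P i}) \<noteq> odd (card {i. i < n \<and> M i \<and> Q i}))"
  by (induction n) (auto simp: card_Suc_filter)

lemma sum_indicator_upt:
  "(\<Sum>c<(n::nat). if P c then 1 else 0 :: real) = real (card {c. c < n \<and> P c})"
proof (induction n)
  case (Suc n) then show ?case by (simp add: card_Suc_filter)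
qed simp

fun bin_val :: "bool list \<Rightarrow> nat" where
  "bin_val [] = 0"
| "bin_val (b # M) = (if b then 1 else 0) + 2 * bin_val M"

lemma bin_val_inj: "length M = length M' \<Longrightarrow> bin_val M = bin_val M' \<Longrightarrow> M = M'"
proof (induction M arbitrary: M')
  case (Cons b M)
  then obtain b' M'' where M': "M' = b' # M''" by (cases M') auto
  have eq: "(if b then 1 else 0) + 2 * bin_val M = (if b' then 1 else 0) + 2 * bin_val M''"
    using Cons.prems M' by simp
  have bb: "b = b'" using arg_cong[OF eq, of odd] by (simp split: if_splits)
  then have "bin_val M = bin_val M''" using eq by simp
  then have "M = M''" using Cons.IH Cons.prems M' by simp
  then show ?case using bb M' by simp
qed simp

lemma bin_val_lt: "bin_val M < 2 ^ length M"
  by (induction M) auto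

definition pair_bound :: "nat \<Rightarrow> nat" where "pair_bound x = (2 * x + 1)^2"

lemma le_pair_bound: "x \<le> pair_bound x" by (simp add: pair_bound_def power2_eq_square)

lemma prod_encode_le_pair_bound:
  assumes "a \<le> A" "b \<le> A"
  shows "prod_encode (a, b) \<le> pair_bound A"
proof -
  have "triangle (a + b) \<le> (a + b) * (a + b + 1)" unfolding triangle_def by simp
  then have "prod_encode (a, b) \<le> (a + b) * (a + b + 1) + a"
    unfolding prod_encode_def using assms by simp
  also have "\<dots> \<le> (2 * A) * (2 * A + 1) + A" using assms by (intro add_mono mult_mono) auto
  also have "\<dots> \<le> pair_bound A" by (simp add: pair_bound_def power2_eq_square algebra_simps)
  finally show ?thesis .
qed

lemma sum_list_upt_set: "sum_list (map g [0..<n]) = (\<Sum>c<n. g c :: real)"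
  by (simp add: sum_set_upt_conv_sum_list_nat[symmetric] atLeast0LessThan)

lemma distinct_concat_pair_lists:
  assumes "distinct xs" "inj_on f (set xs)" "inj_on g (set xs)" "\<forall>a\<in>set xs. \<forall>b\<in>set xs. f a \<noteq> g b"
  shows "distinct (concat (map (\<lambda>x. [f x, g x]) xs))"
  using assms
proof (induction xs)
  case (Cons a xs)
  have "distinct (concat (map (\<lambda>x. [f x, g x]) xs))" using Cons by (auto simp: inj_on_insert)
  moreover have "f a \<notin> set (concat (map (\<lambda>x. [f x, g x]) xs))" "g a \<notin> set (concat (map (\<lambda>x. [f x, g x]) xs))"
    using Cons.prems by (auto simp: inj_on_def)
  moreover have "f a \<noteq> g a" using Cons.prems by auto
  ultimately show ?case by simp
qed simp

lemma sum_list_pairs: "sum_list (map F (concat (map (\<lambda>a. map (\<lambda>c. (a,c)) (h a)) xs))) = sum_list (map (\<lambda>a. sum_list (map (\<lambda>c. F (a,c)) (h a))) xs)"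
  by (induction xs) (simp_all add: comp_def)

lemma mem_image_case_prod3: "q \<in> (\<lambda>(a,b,c). f a b c) ` S \<longleftrightarrow> (\<exists>a b c. (a,b,c) \<in> S \<and> q = f a b c)"
proof
  assume "q \<in> (\<lambda>(a,b,c). f a b c) ` S"
  then obtain z where "z \<in> S" "q = (\<lambda>(a,b,c). f a b c) z" by blast
  then show "\<exists>a b c. (a,b,c) \<in> S \<and> q = f a b c" by (cases z) auto
next
  assume "\<exists>a b c. (a,b,c) \<in> S \<and> q = f a b c"
  then obtain a b c where "(a,b,c) \<in> S" "q = f a b c" by blast
  then show "q \<in> (\<lambda>(a,b,c). f a b c) ` S" by (intro image_eqI[of _ _ "(a,b,c)"]) auto
qed

section \<open>Segments: Clifford circuits and diagonal layers\<close>

datatype segment = Cliff "gate list" | Layer "(nat \<times> nat \<times> (bool \<Rightarrow> bool \<Rightarrow> real)) list"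

text \<open>\<open>to_cliff\<close> is only applied to gates satisfying \<open>is_cliff_gate\<close>; its value on
  \<^const>\<open>Diag\<close> is arbitrary.\<close>

fun to_cliff :: "gate \<Rightarrow> cliff_gate" where
  "to_cliff (Had q) = Hg q"
| "to_cliff (CX c t) = CNOTg c t"
| "to_cliff (Diag i j f) = Hg 0"

fun is_cliff_gate :: "gate \<Rightarrow> bool" where
  "is_cliff_gate (Had q) = True"
| "is_cliff_gate (CX c t) = True"
| "is_cliff_gate (Diag i j f) = False"

definition layer_gates :: "(nat \<times> nat \<times> (bool \<Rightarrow> bool \<Rightarrow> real)) list \<Rightarrow> (nat \<times> nat \<times> (bool \<times> bool \<Rightarrow> bool \<times> bool \<Rightarrow> complex)) list" where
  "layer_gates L = map (\<lambda>(i,j,f). (i,j,diag_mat f)) L"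

fun seg_op :: "nat \<Rightarrow> segment \<Rightarrow> qop" where
  "seg_op N (Cliff gs) = seq_op N (map (cliff_gate_op N) (map to_cliff gs))"
| "seg_op N (Layer L) = seq_op N [layer_op N (layer_gates L)]"

fun seg_gates :: "segment \<Rightarrow> gate list" where
  "seg_gates (Cliff gs) = gs"
| "seg_gates (Layer L) = map diag_gate L"

fun is_cliff :: "segment \<Rightarrow> bool" where
  "is_cliff (Cliff gs) = True"
| "is_cliff (Layer L) = False"

fun seg_ok :: "nat \<Rightarrow> segment \<Rightarrow> bool" where
  "seg_ok N (Cliff gs) = (\<forall>g\<in>set gs. is_cliff_gate g \<and> gate_ok N g)"
| "seg_ok N (Layer L) = (diags_ok N L \<and> distinct (concat (map (\<lambda>(i,j,f). [i,j]) L)))"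

lemma restrict_state_state_on: "state_on N \<psi> \<Longrightarrow> restrict_state N \<psi> = \<psi>"
  by (auto simp: restrict_state_def state_on_def fun_eq_iff)

lemma cliff_gate_op_to_cliff: "is_cliff_gate g \<Longrightarrow> cliff_gate_op N (to_cliff g) = gate_op N g"
  by (cases g) auto

lemma seg_op_apply:
  assumes "seg_ok N s" "state_on N \<psi>"
  shows "apply_op N (seg_op N s) \<psi> = gates_apply N (seg_gates s) \<psi>"
proof (cases s)
  case (Cliff gs)
  have e: "map (cliff_gate_op N) (map to_cliff gs) = map (gate_op N) gs"
    using assms Cliff by (auto simp: cliff_gate_op_to_cliff)
  have "apply_op N (seg_op N s) \<psi> = run_ops N (map (cliff_gate_op N) (map to_cliff gs)) \<psi>"
    using assms Cliff by (simp only: seg_op.simps apply_seq_op restrict_state_state_on)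
  also have "\<dots> = gates_apply N gs \<psi>" unfolding e by (rule run_ops_map_gate_op)
  finally show ?thesis using Cliff by simp
next
  case (Layer L)
  have e: "map (\<lambda>(i, j, G). emb2 N i j G) (layer_gates L) = map (gate_op N) (map diag_gate L)"
    by (auto simp: layer_gates_def diag_gate_def)
  have "apply_op N (seg_op N s) \<psi> = apply_op N (layer_op N (layer_gates L)) \<psi>"
    using assms Layer by (simp add: apply_seq_op restrict_state_state_on)
  also have "\<dots> = gates_apply N (map diag_gate L) \<psi>"
    unfolding layer_op_def apply_seq_op e using assms by (simp only: restrict_state_state_on run_ops_map_gate_op)
  finally show ?thesis using Layer by simp
qed

lemma apply_seq_op_segs:
  assumes "\<forall>s\<in>set segs. seg_ok N s" "state_on N \<psi>"
  shows "apply_op N (seq_op N (map (seg_op N) segs)) \<psi> = gates_apply N (concat (map seg_gates segs)) \<psi>"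
proof -
  have "run_ops N (map (seg_op N) segs) \<psi> = gates_apply N (concat (map seg_gates segs)) \<psi>"
    using assms
  proof (induction segs arbitrary: \<psi>)
    case (Cons s segs)
    have "run_ops N (map (seg_op N) (s # segs)) \<psi> = run_ops N (map (seg_op N) segs) (gates_apply N (seg_gates s) \<psi>)"
      using Cons.prems by (simp add: seg_op_apply)
    also have "\<dots> = gates_apply N (concat (map seg_gates segs)) (gates_apply N (seg_gates s) \<psi>)"
      using Cons by (simp add: state_on_gates_apply)
    finally show ?case by simp
  qed simp
  then show ?thesis using assms by (simp add: apply_seq_op restrict_state_state_on)
qed

lemma UNIV_bool_pair: "(UNIV :: (bool \<times> bool) set) = {(False,False),(False,True),(True,False),(True,True)}"
  by auto

lemma unitary2_diag_mat: "unitary2 (diag_mat f)"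
  unfolding unitary2_def
proof (intro allI)
  fix a b :: "bool \<times> bool"
  show "(\<Sum>c\<in>UNIV. cnj (diag_mat f c a) * diag_mat f c b) = (if a = b then 1 else 0)"
    by (cases a; cases b) (auto simp: diag_mat_def UNIV_bool_pair cis_cnj cis_mult)
qed

definition alternating :: "nat \<Rightarrow> segment list \<Rightarrow> bool" where
  "alternating p xs \<longleftrightarrow> (\<forall>i<length xs. is_cliff (xs!i) = even (i + p))"

lemma layer_ok_layer_gates:
  assumes "seg_ok N (Layer L)"
  shows "layer_ok N (layer_gates L)"
  unfolding layer_ok_def
proof
  have "concat (map (\<lambda>(i, j, G). [i, j]) (layer_gates L)) = concat (map (\<lambda>(i,j,f). [i,j]) L)"
    by (auto simp: layer_gates_def comp_def case_prod_unfold)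
  then show "distinct (concat (map (\<lambda>(i, j, G). [i, j]) (layer_gates L)))" using assms by simp
  show "\<forall>(i, j, G)\<in>set (layer_gates L). i < N \<and> j < N \<and> unitary2 G"
    using assms by (auto simp: layer_gates_def diags_ok_def unitary2_diag_mat)
qed

lemma acq_of_segs:
  assumes len: "length segs = k + 1" and alt: "alternating 0 segs" and ok: "\<forall>s\<in>set segs. seg_ok N s"
  shows "acq_circuit N k 1 (seq_op N (map (seg_op N) segs))"
  unfolding acq_circuit_def
proof (intro exI conjI allI impI)
  show "length (map (seg_op N) segs) = k + 1" using len by simp
  show "seq_op N (map (seg_op N) segs) = seq_op N (map (seg_op N) segs)" ..
next
  fix i assume i: "i \<le> k" "even i"
  then have il: "i < length segs" using len by simp
  then have "is_cliff (segs ! i)" using alt i by (simp add: alternating_def)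
  then obtain gs where s: "segs ! i = Cliff gs" by (cases "segs ! i") auto
  have "seg_ok N (Cliff gs)" using ok il s by (metis nth_mem)
  then show "clifford_circuit N (map (seg_op N) segs ! i)"
    unfolding clifford_circuit_def using il s
    by (intro exI[of _ "map to_cliff gs"]) (auto elim!: is_cliff_gate.elims simp: image_iff)
next
  fix i assume i: "i \<le> k" "odd i"
  then have il: "i < length segs" using len by simp
  then have "\<not> is_cliff (segs ! i)" using alt i by (simp add: alternating_def)
  then obtain L where s: "segs ! i = Layer L" by (cases "segs ! i") auto
  have "seg_ok N (Layer L)" using ok il s by (metis nth_mem)
  then show "qnc0_circuit N 1 (map (seg_op N) segs ! i)"
    unfolding qnc0_circuit_def using il s layer_ok_layer_gates by (intro exI[of _ "[layer_gates L]"]) auto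
qed

lemma alternating_append: "alternating p xs \<Longrightarrow> alternating (p + length xs) ys \<Longrightarrow> alternating p (xs @ ys)"
  unfolding alternating_def
proof (intro allI impI)
  fix i assume a: "\<forall>i<length xs. is_cliff (xs ! i) = even (i + p)"
    "\<forall>i<length ys. is_cliff (ys ! i) = even (i + (p + length xs))" "i < length (xs @ ys)"
  show "is_cliff ((xs @ ys) ! i) = even (i + p)"
  proof (cases "i < length xs")
    case True then show ?thesis using a by (simp add: nth_append)
  next
    case False
    then show ?thesis using a(2)[rule_format, of "i - length xs"] a(3) by (simp add: nth_append)
  qed
qed

lemma alternating_shift_even: "even q \<Longrightarrow> alternating (p + q) xs = alternating p xs"
  by (auto simp: alternating_def elim!: evenE)

lemma alternating_concat:
  assumes "\<forall>z\<in>set zs. alternating p (f z) \<and> even (length (f z))"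
  shows "alternating p (concat (map f zs))"
  using assms
proof (induction zs)
  case Nil then show ?case by (simp add: alternating_def)
next
  case (Cons z zs)
  then show ?case by (simp add: alternating_append alternating_shift_even)
qed

lemma alternating_Cons: "alternating p (s # xs) \<longleftrightarrow> (is_cliff s = even p) \<and> alternating (Suc p) xs"
  unfolding alternating_def by (auto simp add: All_less_Suc2)

lemma alternating_Nil[simp]: "alternating p []" by (simp add: alternating_def)

fun gate_inv :: "gate \<Rightarrow> gate" where
  "gate_inv (Had q) = Had q"
| "gate_inv (CX c t) = CX c t"
| "gate_inv (Diag i j f) = Diag i j (\<lambda>a b. - f a b)"

fun seg_inv :: "segment \<Rightarrow> segment" where
  "seg_inv (Cliff gs) = Cliff (rev (map gate_inv gs))"
| "seg_inv (Layer L) = Layer (map (\<lambda>(i,j,f). (i,j,\<lambda>a b. - f a b)) L)"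

lemma is_cliff_seg_inv[simp]: "is_cliff (seg_inv s) = is_cliff s" by (cases s) auto

lemma alternating_rev:
  assumes "alternating 0 xs" "even (length xs)"
  shows "alternating 1 (rev (map seg_inv xs))"
  unfolding alternating_def
proof (intro allI impI)
  fix i assume i: "i < length (rev (map seg_inv xs))"
  then have "rev (map seg_inv xs) ! i = seg_inv (xs ! (length xs - Suc i))" by (simp add: rev_nth)
  moreover have "is_cliff (xs ! (length xs - Suc i)) = even (length xs - Suc i)"
    using assms(1) i by (simp add: alternating_def)
  moreover have "even (length xs - Suc i) = even (i + 1)" using assms(2) i by auto
  ultimately show "is_cliff (rev (map seg_inv xs) ! i) = even (i + 1)" by simp
qed

lemma gate_apply_Had_Had:
  assumes q: "q < N" and y: "length y = N"
  shows "gate_apply N (Had q) (gate_apply N (Had q) \<psi>) y = \<psi> y"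
proof -
  let ?s = "complex_of_real (sqrt 2)"
  have A: "gate_apply N (Had q) \<psi> (y[q:=False]) = (\<psi> (y[q:=False]) + \<psi> (y[q:=True])) / ?s"
    using q y by (simp add: gate_apply_Had)
  have B: "gate_apply N (Had q) \<psi> (y[q:=True]) = (\<psi> (y[q:=False]) - \<psi> (y[q:=True])) / ?s"
    using q y by (simp add: gate_apply_Had)
  have "gate_apply N (Had q) (gate_apply N (Had q) \<psi>) y
      = ((\<psi> (y[q:=False]) + \<psi> (y[q:=True])) / ?s
         + (if y!q then -1 else 1) * ((\<psi> (y[q:=False]) - \<psi> (y[q:=True])) / ?s)) / ?s"
    using q y A B by (simp add: gate_apply_Had)
  also have "\<dots> = (if y!q then \<psi> (y[q:=True]) else \<psi> (y[q:=False]))"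
    using sqrt2_sq by (auto simp: field_simps)
  also have "\<dots> = \<psi> y"
    by (cases "y!q") (metis list_update_id)+
  finally show ?thesis .
qed

lemma gate_inv_step:
  assumes g: "gate_ok N g" and r: "state_on N \<psi>"
  shows "gate_apply N (gate_inv g) (gate_apply N g \<psi>) = \<psi>"
proof (rule ext)
  fix y
  show "gate_apply N (gate_inv g) (gate_apply N g \<psi>) y = \<psi> y"
  proof (cases "length y = N")
    case False then show ?thesis using r by (simp add: gate_apply_len state_on_def)
  next
    case y: True
    show ?thesis
    proof (cases g)
      case (Had q)
      then show ?thesis using g y by (simp add: gate_apply_Had_Had)
    next
      case (CX c t)
      then have "gate_apply N (gate_inv g) (gate_apply N g \<psi>) y
          = \<psi> ((y[t := (y!t \<noteq> y!c)])[t := ((y!t \<noteq> y!c) \<noteq> y!c)])"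
        using g y by (simp add: gate_apply_CX)
      also have "((y!t \<noteq> y!c) \<noteq> y!c) = y!t" by auto
      finally show ?thesis by simp
    next
      case (Diag i j f)
      then show ?thesis using g y by (simp add: gate_apply_Diag cis_mult)
    qed
  qed
qed

lemma gates_apply_inv:
  assumes "\<forall>g\<in>set gs. gate_ok N g" "state_on N \<psi>"
  shows "gates_apply N (rev (map gate_inv gs)) (gates_apply N gs \<psi>) = \<psi>"
  using assms
proof (induction gs arbitrary: \<psi>)
  case (Cons g gs)
  have "gates_apply N (rev (map gate_inv (g # gs))) (gates_apply N (g # gs) \<psi>)
      = gate_apply N (gate_inv g) (gates_apply N (rev (map gate_inv gs)) (gates_apply N gs (gate_apply N g \<psi>)))" by simp
  also have "\<dots> = gate_apply N (gate_inv g) (gate_apply N g \<psi>)" using Cons by (simp add: state_on_gate_apply)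
  also have "\<dots> = \<psi>" using Cons.prems by (simp add: gate_inv_step)
  finally show ?case .
qed simp

lemma diag_phase_neg: "diag_phase (map (\<lambda>(i,j,f). (i,j,\<lambda>a b. - f a b)) L) y = - diag_phase L y"
  by (induction L) (auto simp: diag_phase_def)

lemma seg_gates_inv:
  assumes "seg_ok N s" "state_on N \<psi>"
  shows "gates_apply N (seg_gates (seg_inv s)) (gates_apply N (seg_gates s) \<psi>) = \<psi>"
proof (cases s)
  case (Cliff gs)
  then show ?thesis using assms by (simp add: gates_apply_inv)
next
  case (Layer L)
  let ?L' = "map (\<lambda>(i,j,f). (i,j,\<lambda>a b. - f a b)) L"
  have ok: "diags_ok N L" using assms Layer by simp
  have ok': "diags_ok N ?L'" using ok by (auto simp: diags_ok_def)
  show ?thesis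
  proof (rule ext)
    fix y
    show "gates_apply N (seg_gates (seg_inv s)) (gates_apply N (seg_gates s) \<psi>) y = \<psi> y"
    proof (cases "length y = N")
      case True
      then show ?thesis using Layer gates_apply_diags[OF ok True] gates_apply_diags[OF ok' True]
        by (simp add: diag_phase_neg cis_mult)
    next
      case False
      have "state_on N (gates_apply N (seg_gates (seg_inv s)) (gates_apply N (seg_gates s) \<psi>))" using assms by (simp add: state_on_gates_apply)
      then show ?thesis using False assms by (simp add: state_on_def)
    qed
  qed
qed

lemma gates_apply_segs_inv:
  assumes "\<forall>s\<in>set segs. seg_ok N s" "state_on N \<psi>"
  shows "gates_apply N (concat (map seg_gates (rev (map seg_inv segs)))) (gates_apply N (concat (map seg_gates segs)) \<psi>) = \<psi>"
  using assms
proof (induction segs arbitrary: \<psi>)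
  case (Cons s segs)
  have "gates_apply N (concat (map seg_gates (rev (map seg_inv (s # segs))))) (gates_apply N (concat (map seg_gates (s # segs))) \<psi>)
     = gates_apply N (seg_gates (seg_inv s)) (gates_apply N (concat (map seg_gates (rev (map seg_inv segs))))
          (gates_apply N (concat (map seg_gates segs)) (gates_apply N (seg_gates s) \<psi>)))" by simp
  also have "\<dots> = gates_apply N (seg_gates (seg_inv s)) (gates_apply N (seg_gates s) \<psi>)"
    using Cons by (simp add: state_on_gates_apply)
  also have "\<dots> = \<psi>" using Cons.prems by (simp add: seg_gates_inv)
  finally show ?case .
qed simp

lemma seg_ok_inv: "seg_ok N s \<Longrightarrow> seg_ok N (seg_inv s)"
proof (cases s)
  case (Cliff gs)
  assume "seg_ok N s"
  then show ?thesis using Cliff by (auto elim!: is_cliff_gate.elims)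
next
  case (Layer L)
  assume "seg_ok N s"
  moreover have "concat (map (\<lambda>(i,j,f). [i,j]) (map (\<lambda>(i,j,f). (i,j,\<lambda>a b. - f a b)) L)) = concat (map (\<lambda>(i,j,f). [i,j]) L)"
    by (induction L) auto
  ultimately show ?thesis using Layer by (auto simp: diags_ok_def)
qed

definition flip :: "nat \<Rightarrow> qstate \<Rightarrow> qstate" where
  "flip t \<psi> y = \<psi> (y[t := \<not> y!t])"

fun gate_qubits :: "gate \<Rightarrow> nat set" where
  "gate_qubits (Had q) = {q}"
| "gate_qubits (CX c t) = {c, t}"
| "gate_qubits (Diag i j f) = {i, j}"

lemma gate_apply_flip:
  assumes t: "t \<notin> gate_qubits g" and g: "gate_ok N g"
  shows "gate_apply N g (flip t \<psi>) = flip t (gate_apply N g \<psi>)"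
proof (rule ext)
  fix y
  show "gate_apply N g (flip t \<psi>) y = flip t (gate_apply N g \<psi>) y"
  proof (cases "length y = N")
    case False then show ?thesis by (simp add: gate_apply_len flip_def)
  next
    case y: True
    show ?thesis
    proof (cases g)
      case (Had q)
      then show ?thesis using t g y by (simp add: gate_apply_Had flip_def list_update_swap)
    next
      case (CX c t')
      then show ?thesis using t g y by (simp add: gate_apply_CX flip_def list_update_swap)
    next
      case (Diag i j f)
      then show ?thesis using t g y by (simp add: gate_apply_Diag flip_def)
    qed
  qed
qed

lemma gates_apply_flip:
  assumes "\<forall>g\<in>set gs. t \<notin> gate_qubits g \<and> gate_ok N g"
  shows "gates_apply N gs (flip t \<psi>) = flip t (gates_apply N gs \<psi>)"
  using assms by (induction gs arbitrary: \<psi>) (simp_all add: gate_apply_flip)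

lemma prod_state_CX_flip:
  assumes c: "c < N" "t < N" "c \<noteq> t" and cl: "\<phi> c = ket1 a"
  shows "gate_apply N (CX c t) (prod_state N \<phi>) = (if a then flip t (prod_state N \<phi>) else prod_state N \<phi>)"
proof (rule ext)
  fix y
  show "gate_apply N (CX c t) (prod_state N \<phi>) y = (if a then flip t (prod_state N \<phi>) else prod_state N \<phi>) y"
  proof (cases "length y = N")
    case False then show ?thesis by (simp add: gate_apply_len flip_def prod_state_def)
  next
    case y: True
    show ?thesis
    proof (cases "y!c = a")
      case True
      then show ?thesis using c y by (cases a) (simp_all add: gate_apply_CX flip_def)
    next
      case False
      have z: "prod_state N \<phi> (y[t := v]) = 0" for v
        using prod_state_factor[of c N "y[t := v]" \<phi>] c y cl False by (simp add: ket1_def)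
      have "prod_state N \<phi> y = 0"
        using prod_state_factor[of c N y \<phi>] c y cl False by (simp add: ket1_def)
      then show ?thesis using c y z by (simp add: gate_apply_CX flip_def)
    qed
  qed
qed

lemma ket_flip:
  assumes "length x = m"
  shows "ket (x @ [\<not> b] @ zs) = flip m (ket (x @ [b] @ zs))"
proof (rule ext)
  fix y
  show "ket (x @ [\<not> b] @ zs) y = flip m (ket (x @ [b] @ zs)) y"
  proof (cases "m < length y")
    case True
    have "(y[m := \<not> y!m] = x @ [b] @ zs) \<longleftrightarrow> (y = x @ [\<not> b] @ zs)"
    proof
      assume h: "y[m := \<not> y!m] = x @ [b] @ zs"
      then have "(y[m := \<not> y!m])[m := \<not> b] = x @ [\<not> b] @ zs" using assms by (simp add: list_update_append)
      moreover have "(x @ [b] @ zs) ! m = b" using assms by (simp add: nth_append)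
      then have "b = (\<not> y!m)" using arg_cong[OF h, of "\<lambda>l. l!m"] True by simp
      ultimately show "y = x @ [\<not> b] @ zs" by simp
    next
      assume h: "y = x @ [\<not> b] @ zs"
      then show "y[m := \<not> y!m] = x @ [b] @ zs" using assms by (simp add: list_update_append nth_append)
    qed
    then show ?thesis by (simp add: ket_def flip_def)
  next
    case False
    then have "y \<noteq> x @ [\<not> b] @ zs" "y \<noteq> x @ [b] @ zs" using assms by auto
    moreover have "y[m := \<not> y!m] = y" using False by (simp add: list_update_beyond)
    ultimately show ?thesis by (simp add: ket_def flip_def)
  qed
qed

lemma seg_inv_gates_avoid:
  assumes "seg_ok N s" "\<forall>g\<in>set (seg_gates s). t \<notin> gate_qubits g"
  shows "\<forall>g\<in>set (seg_gates (seg_inv s)). t \<notin> gate_qubits g \<and> gate_ok N g"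
proof (cases s)
  case (Cliff gs)
  then show ?thesis using assms
    by (auto elim!: is_cliff_gate.elims) (metis gate_qubits.simps(1,2) gate_inv.simps(1,2) is_cliff_gate.elims(2))+
next
  case (Layer L)
  then show ?thesis using assms by (auto simp: diag_gate_def diags_ok_def)
qed

section \<open>Evaluation of threshold circuits\<close>

lemma eval_gates_append: "eval_gates vs (g1 @ g2) = eval_gates (eval_gates vs g1) g2"
  by (induction g1 arbitrary: vs) auto

lemma eval_gates_prefix: "i < length vs \<Longrightarrow> eval_gates vs g ! i = vs ! i"
  by (induction g arbitrary: vs) (auto simp: nth_append)

lemma eval_gates_len[simp]: "length (eval_gates vs g) = length vs + length g"
  by (induction g arbitrary: vs) auto

lemma eval_gates_nth:
  assumes "k < length g"
  shows "eval_gates vs g ! (length vs + k) = gate_val (eval_gates vs (take k g)) (g ! k)"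
proof -
  have g: "g = take k g @ [g ! k] @ drop (Suc k) g" using assms by (simp add: id_take_nth_drop)
  have "eval_gates vs g = eval_gates (eval_gates vs (take k g) @ [gate_val (eval_gates vs (take k g)) (g!k)]) (drop (Suc k) g)"
    by (subst g) (simp add: eval_gates_append)
  then show ?thesis using assms by (simp add: eval_gates_prefix nth_append)
qed

lemma eval_gates_take: "i < length vs + k \<Longrightarrow> k \<le> length g \<Longrightarrow> eval_gates vs (take k g) ! i = eval_gates vs g ! i"
proof -
  assume a: "i < length vs + k" "k \<le> length g"
  have "eval_gates vs g = eval_gates (eval_gates vs (take k g)) (drop k g)"
    by (subst append_take_drop_id[symmetric, of g k]) (simp only: eval_gates_append)
  then show ?thesis using a by (simp add: eval_gates_prefix)
qed

section \<open>Polynomial bounds\<close>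

definition poly_bounded :: "(nat \<Rightarrow> nat) \<Rightarrow> bool" where
  "poly_bounded f \<longleftrightarrow> (\<exists>A e. \<forall>m. f m \<le> A * (m + 1) ^ e)"

lemma poly_bounded_const: "poly_bounded (\<lambda>m. c)"
  unfolding poly_bounded_def by (rule exI[of _ c], rule exI[of _ 0]) simp

lemma poly_bounded_pow: "poly_bounded (\<lambda>m. m ^ k)"
  unfolding poly_bounded_def by (rule exI[of _ 1], rule exI[of _ k]) (simp add: power_mono)

lemma poly_bounded_add: "poly_bounded f \<Longrightarrow> poly_bounded g \<Longrightarrow> poly_bounded (\<lambda>m. f m + g m)"
proof -
  assume "poly_bounded f" "poly_bounded g"
  then obtain A1 e1 A2 e2 where h: "\<forall>m. f m \<le> A1 * (m + 1) ^ e1" "\<forall>m. g m \<le> A2 * (m + 1) ^ e2"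
    unfolding poly_bounded_def by blast
  have "f m + g m \<le> (A1 + A2) * (m + 1) ^ (e1 + e2)" for m
  proof -
    have "(m + 1) ^ e1 \<le> (m + 1) ^ (e1 + e2)" "(m + 1) ^ e2 \<le> (m + 1) ^ (e1 + e2)"
      by (simp_all add: power_increasing)
    then have "f m \<le> A1 * (m + 1) ^ (e1 + e2)" "g m \<le> A2 * (m + 1) ^ (e1 + e2)"
      using h by (meson le_trans mult_le_mono2)+
    then show ?thesis by (simp add: algebra_simps)
  qed
  then show ?thesis unfolding poly_bounded_def by blast
qed

lemma poly_bounded_mult: "poly_bounded f \<Longrightarrow> poly_bounded g \<Longrightarrow> poly_bounded (\<lambda>m. f m * g m)"
proof -
  assume "poly_bounded f" "poly_bounded g"
  then obtain A1 e1 A2 e2 where h: "\<forall>m. f m \<le> A1 * (m + 1) ^ e1" "\<forall>m. g m \<le> A2 * (m + 1) ^ e2"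
    unfolding poly_bounded_def by blast
  have "f m * g m \<le> (A1 * A2) * (m + 1) ^ (e1 + e2)" for m
  proof -
    have "f m * g m \<le> (A1 * (m + 1) ^ e1) * (A2 * (m + 1) ^ e2)" using h by (intro mult_le_mono) auto
    then show ?thesis by (simp add: power_add algebra_simps)
  qed
  then show ?thesis unfolding poly_bounded_def by blast
qed

lemma poly_bounded_pair_bound: "poly_bounded f \<Longrightarrow> poly_bounded (\<lambda>m. pair_bound (f m))"
proof -
  assume f: "poly_bounded f"
  have f1: "poly_bounded (\<lambda>m. 2 * f m + 1)"
    by (rule poly_bounded_add[OF poly_bounded_mult[OF poly_bounded_const[of 2] f] poly_bounded_const[of 1]])
  have "poly_bounded (\<lambda>m. (2 * f m + 1) * (2 * f m + 1))" by (rule poly_bounded_mult[OF f1 f1])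
  then show ?thesis by (simp add: pair_bound_def power2_eq_square)
qed

lemma poly_bounded_imp_bound:
  assumes "poly_bounded f"
  shows "\<exists>c. \<forall>m. f m \<le> c * m ^ c + c"
proof -
  obtain A e where h: "\<forall>m. f m \<le> A * (m + 1) ^ e" using assms unfolding poly_bounded_def by blast
  define c where "c = A * 2 ^ e + e"
  have "f m \<le> c * m ^ c + c" for m
  proof (cases "m = 0")
    case True
    have "(1::nat) \<le> 2 ^ e" by simp
    then have "A * 1 \<le> A * 2 ^ e" by (rule mult_le_mono2)
    then have "A \<le> c" unfolding c_def by linarith
    then have "f m \<le> c" using True h[rule_format, of 0] by simp
    then show ?thesis by (simp add: trans_le_add2)
  next
    case False
    have "(m + 1) ^ e \<le> (2 * m) ^ e" using False by (intro power_mono) auto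
    also have "\<dots> = 2 ^ e * m ^ e" by (simp add: power_mult_distrib)
    also have "m ^ e \<le> m ^ c" using False by (intro power_increasing) (auto simp: c_def)
    finally have "(m + 1) ^ e \<le> 2 ^ e * m ^ c" by simp
    then have "f m \<le> A * (2 ^ e * m ^ c)" using h[rule_format, of m] by (meson le_trans mult_le_mono2)
    also have "\<dots> \<le> c * m ^ c" by (simp add: c_def algebra_simps)
    finally show ?thesis by simp
  qed
  then show ?thesis by blast
qed

definition anc_count :: "nat \<Rightarrow> nat" where
  "anc_count W = pair_bound (pair_bound (pair_bound (pair_bound (4 * W + 5)))) + 1"

lemma pair_bound_mono: "x \<le> y \<Longrightarrow> pair_bound x \<le> pair_bound y"
  by (simp add: pair_bound_def)

lemma anc_count_mono: "W \<le> W' \<Longrightarrow> anc_count W \<le> anc_count W'"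
  by (simp add: anc_count_def pair_bound_mono)

lemma anc_count_poly_bound: "\<exists>c. \<forall>m. anc_count (m + (a * m ^ a + a)) \<le> c * m ^ c + c"
proof -
  have "poly_bounded (\<lambda>m. m)" using poly_bounded_pow[of 1] by simp
  then have "poly_bounded (\<lambda>m. 4 * (m + (a * m ^ a + a)) + 5)"
    by (intro poly_bounded_add poly_bounded_mult poly_bounded_const poly_bounded_pow)
  then have "poly_bounded (\<lambda>m. anc_count (m + (a * m ^ a + a)))"
    unfolding anc_count_def
    by (intro poly_bounded_add[OF _ poly_bounded_const]) (intro poly_bounded_pair_bound)
  then show ?thesis by (rule poly_bounded_imp_bound)
qed

section \<open>The construction\<close>

locale tc_construction =
  fixes m :: nat and gs :: "tc_gate list" and outw :: nat and d :: nat
  assumes wf: "tc_wf m d (gs, outw)"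
begin

definition G where "G = length gs"
definition lits where "lits k = fst (gs ! k)"
definition thr where "thr k = fst (snd (gs ! k))"
definition layer where "layer k = gate_layer (gs ! k)"
definition fanin where "fanin k = length (lits k)"
definition lit_wire where "lit_wire k c = fst (lits k ! c)"
definition lit_neg where "lit_neg k c = snd (lits k ! c)"
definition W where "W = m + G"
definition K where "K = (LEAST K. W < 2 ^ K)"
definition idx_bound where "idx_bound = 4 * W + 5"
definition n_anc where "n_anc = anc_count W"
definition N where "N = m + 1 + n_anc"

lemma wf_out: "outw < m + G" using wf by (simp add: tc_wf_def G_def)
lemma wf_layer: "k < G \<Longrightarrow> 1 \<le> layer k \<and> layer k \<le> d" using wf by (simp add: tc_wf_def G_def layer_def)
lemma wf_dist: "k < G \<Longrightarrow> distinct (map fst (lits k))" using wf by (simp add: tc_wf_def G_def lits_def)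
lemma wf_lit: "k < G \<Longrightarrow> lt \<in> set (lits k) \<Longrightarrow> fst lt < m + k \<and> (m \<le> fst lt \<longrightarrow> layer (fst lt - m) < layer k)"
  using wf by (simp add: tc_wf_def G_def lits_def layer_def)

lemma lit_wire_lt: "k < G \<Longrightarrow> c < fanin k \<Longrightarrow> lit_wire k c < m + k"
  using wf_lit[of k "lits k ! c"] by (simp add: lit_wire_def fanin_def)
lemma lit_wire_layer: "k < G \<Longrightarrow> c < fanin k \<Longrightarrow> m \<le> lit_wire k c \<Longrightarrow> layer (lit_wire k c - m) < layer k"
  using wf_lit[of k "lits k ! c"] by (simp add: lit_wire_def fanin_def)

lemma fanin_le: "k < G \<Longrightarrow> fanin k \<le> m + k"
proof -
  assume k: "k < G"
  have "fanin k = card (set (map fst (lits k)))"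
    using distinct_card[OF wf_dist[OF k]] by (simp add: fanin_def)
  also have "\<dots> \<le> card {..<m+k}"
    using wf_lit[OF k] by (intro card_mono) auto
  finally show ?thesis by simp
qed

lemma fanin_le_W: "k < G \<Longrightarrow> fanin k \<le> W" using fanin_le by (force simp: W_def)

lemma W_less_two_pow_K: "W < 2 ^ K"
proof -
  have "W < 2 ^ W" by (rule less_exp)
  then show ?thesis unfolding K_def by (rule LeastI)
qed

lemma two_pow_K_le: "2 ^ K \<le> 2 * W + 1"
proof (cases K)
  case (Suc K')
  have "K' < (LEAST K. W < 2 ^ K)" using Suc by (simp add: K_def)
  then have "\<not> W < 2 ^ K'" by (rule not_less_Least)
  then show ?thesis using Suc by simp
qed simp

lemma K_le_bound: "K \<le> 2 * W + 1"
  using two_pow_K_le less_exp[of K] by linarith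

text \<open>Qubits \<open>0..m-1\<close> hold the input and qubit \<open>m\<close> the output; gate \<open>k\<close> owns the ancillas
  \<open>anc tag k u j c\<close>, injectively encoded by \<^const>\<open>prod_encode\<close>, with tag 0 for its output qubit,
  1 for register \<open>(u, j)\<close>, 2 and 3 for the copies of that register and of literal \<open>c\<close> used by the
  counting phases, and 4, 5 for the parity qubit of mask number \<open>j\<close> and its idle partner.\<close>

definition anc :: "nat \<Rightarrow> nat \<Rightarrow> nat \<Rightarrow> nat \<Rightarrow> nat \<Rightarrow> nat" where
  "anc tag k u j c = m + 1 + prod_encode (tag, prod_encode (k, prod_encode (u, prod_encode (j, c))))"

lemma anc_eq[simp]: "anc t k u j c = anc t' k' u' j' c' \<longleftrightarrow> t = t' \<and> k = k' \<and> u = u' \<and> j = j' \<and> c = c'"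
  by (simp add: anc_def)

lemma anc_gt[simp]: "m < anc t k u j c" by (simp add: anc_def)

lemma anc_not_lt[simp]: "\<not> anc t k u j c < m" using anc_gt[of t k u j c] by linarith

lemma anc_neq_m[simp]: "anc t k u j c \<noteq> m" "m \<noteq> anc t k u j c" using anc_gt[of t k u j c] by linarith+

lemma anc_lt:
  assumes "t \<le> idx_bound" "k \<le> idx_bound" "u \<le> idx_bound" "j \<le> idx_bound" "c \<le> idx_bound"
  shows "anc t k u j c < N"
proof -
  have "prod_encode (j, c) \<le> pair_bound idx_bound" using assms by (intro prod_encode_le_pair_bound)
  then have "prod_encode (u, prod_encode (j, c)) \<le> pair_bound (pair_bound idx_bound)"
    using assms le_pair_bound[of idx_bound] by (intro prod_encode_le_pair_bound) auto
  then have "prod_encode (k, prod_encode (u, prod_encode (j, c))) \<le> pair_bound (pair_bound (pair_bound idx_bound))"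
    using assms le_pair_bound[of idx_bound] le_pair_bound[of "pair_bound idx_bound"] by (intro prod_encode_le_pair_bound) auto
  then have "prod_encode (t, prod_encode (k, prod_encode (u, prod_encode (j, c)))) \<le> pair_bound (pair_bound (pair_bound (pair_bound idx_bound)))"
    using assms le_pair_bound[of idx_bound] le_pair_bound[of "pair_bound idx_bound"] le_pair_bound[of "pair_bound (pair_bound idx_bound)"] by (intro prod_encode_le_pair_bound) auto
  then show ?thesis by (simp add: anc_def N_def n_anc_def anc_count_def idx_bound_def)
qed

definition out_q where "out_q k = anc 0 k 0 0 0"
definition reg_q where "reg_q k u j = anc 1 k u j 0"
definition reg_copy_q where "reg_copy_q k u j c = anc 2 k u j c"
definition lit_copy_q where "lit_copy_q k u j c = anc 3 k u j c"
definition par_q where "par_q k u M = anc 4 k u (bin_val M) 0"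
definition idle_q where "idle_q k u M = anc 5 k u (bin_val M) 0"
definition wire_q where "wire_q w = (if w < m then w else out_q (w - m))"

lemmas anc_defs = out_q_def reg_q_def reg_copy_q_def lit_copy_q_def par_q_def idle_q_def

lemma wire_q_cases: "wire_q w < m \<or> wire_q w = out_q (w - m)" by (auto simp: wire_q_def)

lemma wire_q_neq[simp]:
  "wire_q w \<noteq> m" "wire_q w \<noteq> reg_q k u j" "wire_q w \<noteq> reg_copy_q k u j c" "wire_q w \<noteq> lit_copy_q k u j c"
  "wire_q w \<noteq> par_q k u M" "wire_q w \<noteq> idle_q k u M"
  using wire_q_cases[of w] anc_gt[of 1 k u j 0] anc_gt[of 2 k u j c] anc_gt[of 3 k u j c]
    anc_gt[of 4 k u "bin_val M" 0] anc_gt[of 5 k u "bin_val M" 0]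
  by (auto simp: anc_defs)

lemma neq_wire_q[simp]:
  "reg_q k u j \<noteq> wire_q w" "reg_copy_q k u j c \<noteq> wire_q w" "lit_copy_q k u j c \<noteq> wire_q w"
  "par_q k u M \<noteq> wire_q w" "idle_q k u M \<noteq> wire_q w" "m \<noteq> wire_q w"
  using wire_q_neq[of w] by metis+

lemma qubits_distinct[simp]:
  "out_q k \<noteq> reg_q k2 u2 j2"
  "out_q k \<noteq> reg_copy_q k2 u2 j2 c2"
  "out_q k \<noteq> lit_copy_q k2 u2 j2 c2"
  "out_q k \<noteq> par_q k2 u2 M2"
  "out_q k \<noteq> idle_q k2 u2 M2"
  "reg_q k u j \<noteq> out_q k2"
  "reg_q k u j \<noteq> reg_copy_q k2 u2 j2 c2"
  "reg_q k u j \<noteq> lit_copy_q k2 u2 j2 c2"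
  "reg_q k u j \<noteq> par_q k2 u2 M2"
  "reg_q k u j \<noteq> idle_q k2 u2 M2"
  "reg_copy_q k u j c \<noteq> out_q k2"
  "reg_copy_q k u j c \<noteq> reg_q k2 u2 j2"
  "reg_copy_q k u j c \<noteq> lit_copy_q k2 u2 j2 c2"
  "reg_copy_q k u j c \<noteq> par_q k2 u2 M2"
  "reg_copy_q k u j c \<noteq> idle_q k2 u2 M2"
  "lit_copy_q k u j c \<noteq> out_q k2"
  "lit_copy_q k u j c \<noteq> reg_q k2 u2 j2"
  "lit_copy_q k u j c \<noteq> reg_copy_q k2 u2 j2 c2"
  "lit_copy_q k u j c \<noteq> par_q k2 u2 M2"
  "lit_copy_q k u j c \<noteq> idle_q k2 u2 M2"
  "par_q k u M \<noteq> out_q k2"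
  "par_q k u M \<noteq> reg_q k2 u2 j2"
  "par_q k u M \<noteq> reg_copy_q k2 u2 j2 c2"
  "par_q k u M \<noteq> lit_copy_q k2 u2 j2 c2"
  "par_q k u M \<noteq> idle_q k2 u2 M2"
  "idle_q k u M \<noteq> out_q k2"
  "idle_q k u M \<noteq> reg_q k2 u2 j2"
  "idle_q k u M \<noteq> reg_copy_q k2 u2 j2 c2"
  "idle_q k u M \<noteq> lit_copy_q k2 u2 j2 c2"
  "idle_q k u M \<noteq> par_q k2 u2 M2"
  by (simp_all add: anc_defs)

lemma qubits_inj[simp]:
  "out_q k = out_q k2 \<longleftrightarrow> k = k2"
  "reg_q k u j = reg_q k2 u2 j2 \<longleftrightarrow> k = k2 \<and> u = u2 \<and> j = j2"
  "reg_copy_q k u j c = reg_copy_q k2 u2 j2 c2 \<longleftrightarrow> k = k2 \<and> u = u2 \<and> j = j2 \<and> c = c2"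
  "lit_copy_q k u j c = lit_copy_q k2 u2 j2 c2 \<longleftrightarrow> k = k2 \<and> u = u2 \<and> j = j2 \<and> c = c2"
  "par_q k u M = par_q k2 u2 M2 \<longleftrightarrow> k = k2 \<and> u = u2 \<and> bin_val M = bin_val M2"
  "idle_q k u M = idle_q k2 u2 M2 \<longleftrightarrow> k = k2 \<and> u = u2 \<and> bin_val M = bin_val M2"
  by (simp_all add: anc_defs)

lemma qubits_neq_m[simp]:
  "out_q k \<noteq> m" "reg_q k u j \<noteq> m" "reg_copy_q k u j c \<noteq> m" "lit_copy_q k u j c \<noteq> m" "par_q k u M \<noteq> m" "idle_q k u M \<noteq> m"
  "m \<noteq> out_q k" "m \<noteq> reg_q k u j" "m \<noteq> reg_copy_q k u j c" "m \<noteq> lit_copy_q k u j c" "m \<noteq> par_q k u M" "m \<noteq> idle_q k u M"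
  by (simp_all add: anc_defs)

lemma qubits_gt_m[simp]:
  "m < out_q k" "m < reg_q k u j" "m < reg_copy_q k u j c" "m < lit_copy_q k u j c" "m < par_q k u M" "m < idle_q k u M"
  by (simp_all add: anc_defs)

lemma input_neq_qubits[simp]: "w < m \<Longrightarrow> w \<noteq> out_q k" "w < m \<Longrightarrow> w \<noteq> reg_q k u j"
  by (simp_all add: anc_defs anc_def)

definition and_ctl where "and_ctl k u i = (if i = 0 then out_q k else reg_q k u (i - 1))"

definition gates_at where "gates_at l = filter (\<lambda>k. layer k = l) [0..<G]"
definition counts_from where "counts_from k = filter (\<lambda>u. thr k \<le> int u) [0..<Suc (fanin k)]"
definition masks where "masks = List.n_lists (Suc K) [False, True]"

definition reg_idx where "reg_idx l = concat (map (\<lambda>k. map (\<lambda>uj. (k, uj)) (concat (map (\<lambda>u. map (\<lambda>j. (u, j)) [0..<K]) (counts_from k)))) (gates_at l))"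
definition count_idx where "count_idx l = concat (map (\<lambda>k. map (\<lambda>u. (k, u)) (counts_from k)) (gates_at l))"
definition mask_idx where "mask_idx l = concat (map (\<lambda>ku. map (\<lambda>M. (ku, M)) masks) (count_idx l))"
definition copy_idx where "copy_idx l = concat (map (\<lambda>kuj. map (\<lambda>c. (kuj, c)) [0..<Suc (fanin (fst kuj))]) (reg_idx l))"

lemma mem_concat_pairs[simp]:
  "(a, b) \<in> set (concat (map (\<lambda>x. map (\<lambda>y. (x, y)) (f x)) xs)) \<longleftrightarrow> a \<in> set xs \<and> b \<in> set (f a)"
  by auto

lemma mem_gates_at[simp]: "k \<in> set (gates_at l) \<longleftrightarrow> k < G \<and> layer k = l" by (auto simp: gates_at_def)
lemma mem_counts_from[simp]: "u \<in> set (counts_from k) \<longleftrightarrow> u \<le> fanin k \<and> thr k \<le> int u" by (auto simp: counts_from_def)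
lemma mem_masks[simp]: "M \<in> set masks \<longleftrightarrow> length M = Suc K"
  unfolding masks_def by (simp only: set_n_lists) auto
lemma mem_reg_idx[simp]: "(k, u, j) \<in> set (reg_idx l) \<longleftrightarrow> k < G \<and> layer k = l \<and> u \<le> fanin k \<and> thr k \<le> int u \<and> j < K"
  unfolding reg_idx_def by (simp only: mem_concat_pairs) simp
lemma mem_count_idx[simp]: "(k, u) \<in> set (count_idx l) \<longleftrightarrow> k < G \<and> layer k = l \<and> u \<le> fanin k \<and> thr k \<le> int u"
  unfolding count_idx_def by (simp only: mem_concat_pairs) simp
lemma mem_mask_idx[simp]: "((k, u), M) \<in> set (mask_idx l) \<longleftrightarrow> k < G \<and> layer k = l \<and> u \<le> fanin k \<and> thr k \<le> int u \<and> length M = Suc K"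
  unfolding mask_idx_def by (simp only: mem_concat_pairs) simp
lemma mem_copy_idx[simp]: "((k, u, j), c) \<in> set (copy_idx l) \<longleftrightarrow> k < G \<and> layer k = l \<and> u \<le> fanin k \<and> thr k \<le> int u \<and> j < K \<and> c \<le> fanin k"
  unfolding copy_idx_def by (simp only: mem_concat_pairs) auto

lemma dist_gates_at: "distinct (gates_at l)" by (simp add: gates_at_def)
lemma dist_counts_from: "distinct (counts_from k)" by (simp add: counts_from_def)
lemma dist_masks: "distinct masks" unfolding masks_def by (rule distinct_n_lists) simp
lemma dist_reg_idx: "distinct (reg_idx l)"
  unfolding reg_idx_def by (intro distinct_concat_pairs dist_gates_at distinct_concat_pairs dist_counts_from) auto
lemma dist_count_idx: "distinct (count_idx l)"
  unfolding count_idx_def by (intro distinct_concat_pairs dist_gates_at dist_counts_from)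
lemma dist_mask_idx: "distinct (mask_idx l)"
  unfolding mask_idx_def by (intro distinct_concat_pairs dist_count_idx dist_masks)
lemma dist_copy_idx: "distinct (copy_idx l)"
  unfolding copy_idx_def by (intro distinct_concat_pairs dist_reg_idx) auto

lemma le_idx_bound:
  "G \<le> idx_bound" "W \<le> idx_bound" "K \<le> idx_bound" "5 \<le> idx_bound" "k < G \<Longrightarrow> fanin k \<le> idx_bound"
  "length M = Suc K \<Longrightarrow> bin_val M \<le> idx_bound"
proof -
  show "G \<le> idx_bound" "W \<le> idx_bound" "K \<le> idx_bound" "5 \<le> idx_bound" using K_le_bound by (auto simp: idx_bound_def W_def)
  show "k < G \<Longrightarrow> fanin k \<le> idx_bound" using fanin_le_W by (force simp: idx_bound_def)
  show "length M = Suc K \<Longrightarrow> bin_val M \<le> idx_bound"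
    using bin_val_lt[of M] two_pow_K_le by (simp add: idx_bound_def)
qed

lemma out_q_lt: "k < G \<Longrightarrow> out_q k < N"
  using le_idx_bound(1,4) by (auto simp: out_q_def intro!: anc_lt)
lemma reg_q_lt: "k < G \<Longrightarrow> u \<le> fanin k \<Longrightarrow> j < K \<Longrightarrow> reg_q k u j < N"
  using le_idx_bound(1,3,4) le_idx_bound(5)[of k] by (auto simp: reg_q_def intro!: anc_lt)
lemma reg_copy_q_lt: "k < G \<Longrightarrow> u \<le> fanin k \<Longrightarrow> j < K \<Longrightarrow> c \<le> fanin k \<Longrightarrow> reg_copy_q k u j c < N"
  using le_idx_bound(1,3,4) le_idx_bound(5)[of k] by (auto simp: reg_copy_q_def intro!: anc_lt)
lemma lit_copy_q_lt: "k < G \<Longrightarrow> u \<le> fanin k \<Longrightarrow> j < K \<Longrightarrow> c \<le> fanin k \<Longrightarrow> lit_copy_q k u j c < N"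
  using le_idx_bound(1,3,4) le_idx_bound(5)[of k] by (auto simp: lit_copy_q_def intro!: anc_lt)
lemma par_q_lt: "k < G \<Longrightarrow> u \<le> fanin k \<Longrightarrow> length M = Suc K \<Longrightarrow> par_q k u M < N"
  using le_idx_bound(1,3,4) le_idx_bound(5)[of k] le_idx_bound(6)[of M] by (auto simp: par_q_def intro!: anc_lt)
lemma idle_q_lt: "k < G \<Longrightarrow> u \<le> fanin k \<Longrightarrow> length M = Suc K \<Longrightarrow> idle_q k u M < N"
  using le_idx_bound(1,3,4) le_idx_bound(5)[of k] le_idx_bound(6)[of M] by (auto simp: idle_q_def intro!: anc_lt)
lemma wire_q_lt: "w < m + G \<Longrightarrow> wire_q w < N"
  using out_q_lt[of "w - m"] by (auto simp: wire_q_def N_def)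
lemma m_lt: "m < N" by (simp add: N_def)

definition wval where "wval x = eval_gates x gs"

definition lit_count where "lit_count x k = card {c. c < fanin k \<and> (wval x ! lit_wire k c \<noteq> lit_neg k c)}"

lemma lit_count_le: "lit_count x k \<le> fanin k"
proof -
  have "lit_count x k \<le> card {..<fanin k}" unfolding lit_count_def by (intro card_mono) auto
  then show ?thesis by simp
qed

lemma wval_input: "length x = m \<Longrightarrow> w < m \<Longrightarrow> wval x ! w = x ! w"
  by (simp add: wval_def eval_gates_prefix)

lemma wval_gate:
  assumes x: "length x = m" and k: "k < G"
  shows "wval x ! (m + k) = (thr k \<le> int (lit_count x k))"
proof -
  have "wval x ! (m + k) = gate_val (eval_gates x (take k gs)) (gs ! k)"
    using eval_gates_nth[of k gs x] x k by (simp add: wval_def G_def)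
  also have "\<dots> = gate_val (wval x) (gs ! k)"
  proof -
    have "filter (lit_val (eval_gates x (take k gs))) (lits k) = filter (lit_val (wval x)) (lits k)"
    proof (rule filter_cong[OF refl])
      fix lt assume "lt \<in> set (lits k)"
      then have "fst lt < m + k" using wf_lit[OF k] by blast
      then show "lit_val (eval_gates x (take k gs)) lt = lit_val (wval x) lt"
        using x k by (simp add: lit_val_def wval_def eval_gates_take G_def)
    qed
    then show ?thesis by (simp add: gate_val_def lits_def)
  qed
  also have "\<dots> = (thr k \<le> int (length (filter (lit_val (wval x)) (lits k))))"
    by (simp add: gate_val_def lits_def thr_def)
  also have "length (filter (lit_val (wval x)) (lits k)) = lit_count x k"
    by (simp add: length_filter_conv_card lit_count_def lit_val_def fanin_def lit_wire_def lit_neg_def)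
  finally show ?thesis .
qed

lemma tc_eval_wval: "tc_eval x (gs, outw) = wval x ! outw"
  by (simp add: tc_eval_def wval_def)

definition theta where "theta j = pi / 2 ^ j"

definition count_phase where
  "count_phase k u j c = (\<lambda>r v. if c < fanin k then (if r \<and> (v \<noteq> lit_neg k c) then theta j else 0)
                        else (if r then - (theta j * real u) else 0))"

definition had_first where "had_first l = map out_q (gates_at l) @ map (\<lambda>(k,u,j). reg_q k u j) (reg_idx l)"
definition had_regs where "had_regs l = map (\<lambda>(k,u,j). reg_q k u j) (reg_idx l)"
definition had_outs where "had_outs l = map out_q (gates_at l)"

text \<open>So that the phase gates of one layer act on disjoint pairs, each register is copied once per
  literal and once more for the constant term \<open>-u\<close>, and each literal wire once per register.\<close>

definition copy_cnots_at where
  "copy_cnots_at kuj = (case kuj of (k,u,j) \<Rightarrow>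
     map (\<lambda>c. (reg_q k u j, reg_copy_q k u j c)) [0..<Suc (fanin k)] @ map (\<lambda>c. (wire_q (lit_wire k c), lit_copy_q k u j c)) [0..<fanin k])"
definition copy_cnots where "copy_cnots l = concat (map copy_cnots_at (reg_idx l))"
definition count_layer where "count_layer l = map (\<lambda>((k,u,j),c). (reg_copy_q k u j c, lit_copy_q k u j c, count_phase k u j c)) (copy_idx l)"

definition par_cnots_at where
  "par_cnots_at kuM = (case kuM of ((k,u),M) \<Rightarrow> map (\<lambda>i. (and_ctl k u i, par_q k u M)) (filter (\<lambda>i. M!i) [0..<Suc K]))"
definition par_cnots where "par_cnots l = concat (map par_cnots_at (mask_idx l))"

text \<open>The second qubit of each pair in \<open>and_layer\<close> is idle. Since \<open>and_neg M\<close> is the parity of the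
  register positions of \<open>M\<close>, the phases of \<open>and_layer\<close> realise the identity \<open>parity_sum_and\<close> for the
  bits \<open>o, \<not>r\<^sub>0, \<dots>, \<not>r\<^sub>K\<^sub>-\<^sub>1\<close>.\<close>

definition and_coef where "and_coef M = pi / 2 ^ K * (-1) ^ (card {i. i < Suc K \<and> M!i} + 1)"
definition and_neg where "and_neg M = odd (card {i. i < Suc K \<and> M!i \<and> 1 \<le> i})"
definition and_phase where "and_phase M = (\<lambda>a v. if a \<noteq> and_neg M then and_coef M else 0)"
definition and_layer where "and_layer l = map (\<lambda>((k,u),M). (par_q k u M, idle_q k u M, and_phase M)) (mask_idx l)"

definition block where
  "block l = map Had (had_first l) @ conj_diag (copy_cnots l) (count_layer l) @ map Had (had_regs l)
     @ conj_diag (par_cnots l) (and_layer l) @ map Had (had_outs l)"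

lemma mem_copy_cnots_at:
  "(a, t) \<in> set (copy_cnots_at (k,u,j)) \<longleftrightarrow> (\<exists>c. (c \<le> fanin k \<and> a = reg_q k u j \<and> t = reg_copy_q k u j c) \<or> (c < fanin k \<and> a = wire_q (lit_wire k c) \<and> t = lit_copy_q k u j c))"
  by (auto simp: copy_cnots_at_def less_Suc_eq_le image_iff simp del: upt_Suc)

lemma mem_copy_cnots:
  "(a, t) \<in> set (copy_cnots l) \<longleftrightarrow> (\<exists>k u j c. (k,u,j) \<in> set (reg_idx l) \<and>
      ((c \<le> fanin k \<and> a = reg_q k u j \<and> t = reg_copy_q k u j c) \<or> (c < fanin k \<and> a = wire_q (lit_wire k c) \<and> t = lit_copy_q k u j c)))"
proof -
  have "(a,t) \<in> set (copy_cnots l) \<longleftrightarrow> (\<exists>kuj \<in> set (reg_idx l). (a,t) \<in> set (copy_cnots_at kuj))" by (simp add: copy_cnots_def)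
  also have "\<dots> \<longleftrightarrow> (\<exists>k u j. (k,u,j) \<in> set (reg_idx l) \<and> (a,t) \<in> set (copy_cnots_at (k,u,j)))"
    by (metis prod_cases3)
  finally show ?thesis by (simp only: mem_copy_cnots_at) blast
qed

lemma mem_par_cnots_at:
  "(a, t) \<in> set (par_cnots_at ((k,u),M)) \<longleftrightarrow> (\<exists>i. i < Suc K \<and> M!i \<and> a = and_ctl k u i \<and> t = par_q k u M)"
  by (auto simp: par_cnots_at_def image_iff simp del: upt_Suc)

lemma mem_par_cnots:
  "(a, t) \<in> set (par_cnots l) \<longleftrightarrow> (\<exists>k u M i. ((k,u),M) \<in> set (mask_idx l) \<and> i < Suc K \<and> M!i \<and> a = and_ctl k u i \<and> t = par_q k u M)"
proof -
  have "(a,t) \<in> set (par_cnots l) \<longleftrightarrow> (\<exists>kuM \<in> set (mask_idx l). (a,t) \<in> set (par_cnots_at kuM))" by (simp add: par_cnots_def)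
  also have "\<dots> \<longleftrightarrow> (\<exists>k u M. ((k,u),M) \<in> set (mask_idx l) \<and> (a,t) \<in> set (par_cnots_at ((k,u),M)))"
    by (metis prod.collapse)
  finally show ?thesis by (simp only: mem_par_cnots_at) blast
qed

definition block_inv where
  "block_inv x b l \<phi> \<longleftrightarrow> (\<forall>w<m. \<phi> w = ket1 (x!w)) \<and> \<phi> m = ket1 b \<and>
     (\<forall>k<G. layer k < l \<longrightarrow> \<phi> (out_q k) = ket1 (wval x ! (m+k))) \<and>
     (\<forall>k<G. l \<le> layer k \<longrightarrow> (\<forall>t u j c. \<phi> (anc t k u j c) = ket1 False))"

lemma block_inv_wire:
  assumes inv: "block_inv x b l \<phi>" and x: "length x = m" and k: "k < G" "layer k = l" and c: "c < fanin k"
  shows "\<phi> (wire_q (lit_wire k c)) = ket1 (wval x ! lit_wire k c)"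
proof (cases "lit_wire k c < m")
  case True
  then show ?thesis using inv x by (simp add: wire_q_def block_inv_def wval_input)
next
  case False
  define k' where "k' = lit_wire k c - m"
  have k': "k' < G" "layer k' < l" "m + k' = lit_wire k c"
    using lit_wire_lt[OF k(1) c] lit_wire_layer[OF k(1) c] False k by (auto simp: k'_def)
  then show ?thesis using inv False by (simp add: wire_q_def block_inv_def k'_def[symmetric])
qed

definition count_factors where
  "count_factors x l = map (\<lambda>(k,u,j). (reg_q k u j, \<lambda>r. if r then theta j * (real (lit_count x k) - real u) else 0)) (reg_idx l)"

lemma copy_cnots_targets: "(a, t) \<in> set (copy_cnots l) \<Longrightarrow> \<exists>k u j c. t = reg_copy_q k u j c \<or> t = lit_copy_q k u j c"
  unfolding mem_copy_cnots by blast

lemma copy_cnots_controls: "(a, t) \<in> set (copy_cnots l) \<Longrightarrow> (\<exists>k u j. a = reg_q k u j) \<or> (\<exists>w. a = wire_q w)"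
  unfolding mem_copy_cnots by blast

lemma copy_cnots_ok: "(a, t) \<in> set (copy_cnots l) \<Longrightarrow> a < N \<and> t < N \<and> a \<noteq> t \<and> a \<notin> snd ` set (copy_cnots l)"
proof -
  assume at: "(a, t) \<in> set (copy_cnots l)"
  then obtain k u j c where kuj: "(k,u,j) \<in> set (reg_idx l)" and
    cs: "(c \<le> fanin k \<and> a = reg_q k u j \<and> t = reg_copy_q k u j c) \<or> (c < fanin k \<and> a = wire_q (lit_wire k c) \<and> t = lit_copy_q k u j c)"
    unfolding mem_copy_cnots by blast
  have kb: "k < G" "u \<le> fanin k" "j < K" using kuj by auto
  have "a < N \<and> t < N \<and> a \<noteq> t"
    using cs
  proof
    assume "c \<le> fanin k \<and> a = reg_q k u j \<and> t = reg_copy_q k u j c"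
    then show ?thesis using reg_q_lt[OF kb] reg_copy_q_lt[OF kb] by auto
  next
    assume h: "c < fanin k \<and> a = wire_q (lit_wire k c) \<and> t = lit_copy_q k u j c"
    have "lit_wire k c < m + G" using lit_wire_lt[OF kb(1), of c] h kb(1) by linarith
    then show ?thesis using h wire_q_lt lit_copy_q_lt[OF kb] by auto
  qed
  moreover have "a \<notin> snd ` set (copy_cnots l)"
  proof
    assume "a \<in> snd ` set (copy_cnots l)"
    then obtain a' where "(a', a) \<in> set (copy_cnots l)" by force
    then obtain k' u' j' c' where "a = reg_copy_q k' u' j' c' \<or> a = lit_copy_q k' u' j' c'" using copy_cnots_targets by blast
    then show False using copy_cnots_controls[OF at] by auto
  qed
  ultimately show ?thesis by blast
qed

lemma filter_copy_cnots_own: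
  assumes kuj: "(k,u,j) \<in> set (reg_idx l)" and q: "q = reg_copy_q k u j c \<or> q = lit_copy_q k u j c"
  shows "filter (\<lambda>p. snd p = q) (copy_cnots l) = filter (\<lambda>p. snd p = q) (copy_cnots_at (k,u,j))"
proof -
  have "filter (\<lambda>p. snd p = q) (copy_cnots l) = concat (map (\<lambda>x. filter (\<lambda>p. snd p = q) (copy_cnots_at x)) (reg_idx l))"
    by (simp add: copy_cnots_def filter_concat comp_def)
  also have "\<dots> = filter (\<lambda>p. snd p = q) (copy_cnots_at (k,u,j))"
  proof (rule concat_single[OF dist_reg_idx kuj])
    fix x assume x: "x \<in> set (reg_idx l)" "x \<noteq> (k,u,j)"
    obtain k' u' j' where x': "x = (k',u',j')" by (cases x) auto
    show "filter (\<lambda>p. snd p = q) (copy_cnots_at x) = []"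
      using x x' q by (auto simp: filter_empty_conv mem_copy_cnots_at reg_copy_q_def lit_copy_q_def)
  qed
  finally show ?thesis .
qed

lemma filter_copy_cnots_reg:
  assumes "(k,u,j) \<in> set (reg_idx l)" "c \<le> fanin k"
  shows "filter (\<lambda>p. snd p = reg_copy_q k u j c) (copy_cnots l) = [(reg_q k u j, reg_copy_q k u j c)]"
  using assms filter_copy_cnots_own[OF assms(1), of "reg_copy_q k u j c" c]
  by (simp add: copy_cnots_at_def filter_map comp_def reg_copy_q_def lit_copy_q_def filter_upt_eq del: upt_Suc)

lemma filter_copy_cnots_lit:
  assumes "(k,u,j) \<in> set (reg_idx l)" "c < fanin k"
  shows "filter (\<lambda>p. snd p = lit_copy_q k u j c) (copy_cnots l) = [(wire_q (lit_wire k c), lit_copy_q k u j c)]"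
  using assms filter_copy_cnots_own[OF assms(1), of "lit_copy_q k u j c" c]
  by (simp add: copy_cnots_at_def filter_map comp_def reg_copy_q_def lit_copy_q_def filter_upt_eq del: upt_Suc)

lemma filter_copy_cnots_const:
  "filter (\<lambda>p. snd p = lit_copy_q k u j (fanin k)) (copy_cnots l) = []"
  by (auto simp: filter_empty_conv mem_copy_cnots reg_copy_q_def lit_copy_q_def)

lemma copy_cnots_ctl_not_tgt:
  "length y = N \<Longrightarrow> \<forall>(c,t)\<in>set (copy_cnots l). c \<notin> snd ` set (copy_cnots l) \<and> t < length y"
  using copy_cnots_ok by auto

lemma cnot_sim_copy_reg:
  assumes y: "length y = N" and kuj: "(k,u,j) \<in> set (reg_idx l)" and c: "c \<le> fanin k"
  shows "cnot_sim (copy_cnots l) y ! reg_copy_q k u j c = (y ! reg_copy_q k u j c \<noteq> y ! reg_q k u j)"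
proof -
  have kb: "k < G" "u \<le> fanin k" "j < K" using kuj by auto
  show ?thesis
    using cnot_sim_nth_parity[OF copy_cnots_ctl_not_tgt[OF y, of l], of "reg_copy_q k u j c"] reg_copy_q_lt[OF kb c] y
    by (simp add: cnot_count_alt filter_copy_cnots_reg[OF kuj c])
qed

lemma cnot_sim_copy_lit:
  assumes y: "length y = N" and kuj: "(k,u,j) \<in> set (reg_idx l)" and c: "c < fanin k"
  shows "cnot_sim (copy_cnots l) y ! lit_copy_q k u j c = (y ! lit_copy_q k u j c \<noteq> y ! wire_q (lit_wire k c))"
proof -
  have kb: "k < G" "u \<le> fanin k" "j < K" using kuj by auto
  show ?thesis
    using cnot_sim_nth_parity[OF copy_cnots_ctl_not_tgt[OF y, of l], of "lit_copy_q k u j c"] lit_copy_q_lt[OF kb] c y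
    by (simp add: cnot_count_alt filter_copy_cnots_lit[OF kuj c])
qed

lemma cnot_sim_copy_const:
  assumes y: "length y = N" and kuj: "(k,u,j) \<in> set (reg_idx l)"
  shows "cnot_sim (copy_cnots l) y ! lit_copy_q k u j (fanin k) = y ! lit_copy_q k u j (fanin k)"
proof -
  have kb: "k < G" "u \<le> fanin k" "j < K" using kuj by auto
  show ?thesis
    using cnot_sim_nth_parity[OF copy_cnots_ctl_not_tgt[OF y, of l], of "lit_copy_q k u j (fanin k)"] lit_copy_q_lt[OF kb] y
    by (simp add: cnot_count_alt filter_copy_cnots_const)
qed


lemma diag_phase_count_layer: "diag_phase (count_layer l) z = sum_list (map (\<lambda>(k,u,j). sum_list (map (\<lambda>c. count_phase k u j c (z ! reg_copy_q k u j c) (z ! lit_copy_q k u j c)) [0..<Suc (fanin k)])) (reg_idx l))"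
proof -
  have "diag_phase (count_layer l) z = sum_list (map (\<lambda>((k,u,j),c). count_phase k u j c (z ! reg_copy_q k u j c) (z ! lit_copy_q k u j c)) (copy_idx l))"
    unfolding diag_phase_def count_layer_def by (simp add: comp_def case_prod_unfold)
  also have "\<dots> = sum_list (map (\<lambda>kuj. sum_list (map (\<lambda>c. (\<lambda>((k,u,j),c). count_phase k u j c (z ! reg_copy_q k u j c) (z ! lit_copy_q k u j c)) (kuj, c)) [0..<Suc (fanin (fst kuj))])) (reg_idx l))"
    unfolding copy_idx_def by (rule sum_list_pairs)
  also have "\<dots> = sum_list (map (\<lambda>(k,u,j). sum_list (map (\<lambda>c. count_phase k u j c (z ! reg_copy_q k u j c) (z ! lit_copy_q k u j c)) [0..<Suc (fanin k)])) (reg_idx l))"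
    by (intro arg_cong[where f=sum_list] map_cong refl) (auto split: prod.splits)
  finally show ?thesis .
qed

lemma count_phase_sum:
  assumes y: "length y = N" and kuj: "(k,u,j) \<in> set (reg_idx l)"
    and fresh: "\<And>c. c \<le> fanin k \<Longrightarrow> \<not> y ! reg_copy_q k u j c \<and> \<not> y ! lit_copy_q k u j c"
    and wires: "\<And>c. c < fanin k \<Longrightarrow> y ! wire_q (lit_wire k c) = wval x ! lit_wire k c"
  shows "sum_list (map (\<lambda>c. count_phase k u j c (cnot_sim (copy_cnots l) y ! reg_copy_q k u j c)
                                               (cnot_sim (copy_cnots l) y ! lit_copy_q k u j c)) [0..<Suc (fanin k)])
      = (if y ! reg_q k u j then theta j * (real (lit_count x k) - real u) else 0)"
proof -
  let ?z = "cnot_sim (copy_cnots l) y"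
  let ?ph = "\<lambda>c. count_phase k u j c (?z ! reg_copy_q k u j c) (?z ! lit_copy_q k u j c)"
  have z_reg: "?z ! reg_copy_q k u j c = y ! reg_q k u j" if "c \<le> fanin k" for c
    using cnot_sim_copy_reg[OF y kuj that] fresh[OF that] by simp
  have z_lit: "?z ! lit_copy_q k u j c = wval x ! lit_wire k c" if "c < fanin k" for c
    using cnot_sim_copy_lit[OF y kuj that] fresh[of c] wires[OF that] that by simp
  have z_const: "\<not> ?z ! lit_copy_q k u j (fanin k)"
    using cnot_sim_copy_const[OF y kuj] fresh[of "fanin k"] by simp
  have split: "sum_list (map ?ph [0..<Suc (fanin k)]) = (\<Sum>c<fanin k. ?ph c) + ?ph (fanin k)"
    by (simp add: sum_list_upt_set del: upt_Suc)
  have lits: "(\<Sum>c<fanin k. ?ph c)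
      = (\<Sum>c<fanin k. if y ! reg_q k u j \<and> wval x ! lit_wire k c \<noteq> lit_neg k c then theta j else 0)"
    by (intro sum.cong refl) (simp add: z_reg z_lit count_phase_def)
  have const: "?ph (fanin k) = (if y ! reg_q k u j then - (theta j * real u) else 0)"
    by (simp add: z_reg z_const count_phase_def)
  show ?thesis
  proof (cases "y ! reg_q k u j")
    case True
    have "(\<Sum>c<fanin k. if y ! reg_q k u j \<and> wval x ! lit_wire k c \<noteq> lit_neg k c then theta j else 0)
        = theta j * (\<Sum>c<fanin k. if wval x ! lit_wire k c \<noteq> lit_neg k c then 1 else 0)"
      using True by (simp add: sum_distrib_left if_distrib cong: if_cong)
    also have "\<dots> = theta j * real (lit_count x k)" by (simp add: sum_indicator_upt lit_count_def)
    finally show ?thesis using True split lits const by (simp add: algebra_simps)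
  qed (use split lits const in simp)
qed

lemma count_layer_phase:
  assumes y: "length y = N" and nz: "prod_state N \<phi> y \<noteq> 0"
    and fresh: "\<And>k u j c. k < G \<Longrightarrow> layer k = l \<Longrightarrow> u \<le> fanin k \<Longrightarrow> j < K \<Longrightarrow> c \<le> fanin k \<Longrightarrow>
               \<phi> (reg_copy_q k u j c) = ket1 False \<and> \<phi> (lit_copy_q k u j c) = ket1 False"
    and wires: "\<And>k c. k < G \<Longrightarrow> layer k = l \<Longrightarrow> c < fanin k \<Longrightarrow> \<phi> (wire_q (lit_wire k c)) = ket1 (wval x ! lit_wire k c)"
  shows "diag_phase (count_layer l) (cnot_sim (copy_cnots l) y) = phase_sum (count_factors x l) y"
proof -
  have item: "sum_list (map (\<lambda>c. count_phase k u j c (cnot_sim (copy_cnots l) y ! reg_copy_q k u j c)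
                                    (cnot_sim (copy_cnots l) y ! lit_copy_q k u j c)) [0..<Suc (fanin k)])
      = (if y ! reg_q k u j then theta j * (real (lit_count x k) - real u) else 0)"
    if kuj: "(k,u,j) \<in> set (reg_idx l)" for k u j
  proof (rule count_phase_sum[OF y kuj])
    have kb: "k < G" "layer k = l" "u \<le> fanin k" "j < K" using kuj by auto
    show "\<not> y ! reg_copy_q k u j c \<and> \<not> y ! lit_copy_q k u j c" if "c \<le> fanin k" for c
      using prod_state_basis_factor[OF nz y reg_copy_q_lt[OF kb(1,3,4) that]]
        prod_state_basis_factor[OF nz y lit_copy_q_lt[OF kb(1,3,4) that]] fresh[OF kb that] by auto
    show "y ! wire_q (lit_wire k c) = wval x ! lit_wire k c" if "c < fanin k" for c
    proof -
      have "lit_wire k c < m + G" using lit_wire_lt[OF kb(1) that] kb(1) by linarith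
      from prod_state_basis_factor[OF nz y wire_q_lt[OF this] wires[OF kb(1,2) that]]
      show ?thesis .
    qed
  qed
  have "diag_phase (count_layer l) (cnot_sim (copy_cnots l) y)
      = sum_list (map (\<lambda>(k,u,j). if y ! reg_q k u j then theta j * (real (lit_count x k) - real u) else 0) (reg_idx l))"
    unfolding diag_phase_count_layer
    by (intro arg_cong[where f=sum_list] map_cong refl) (auto simp: item simp del: upt_Suc mem_reg_idx)
  also have "\<dots> = phase_sum (count_factors x l) y"
    by (simp add: phase_sum_def count_factors_def comp_def case_prod_unfold)
  finally show ?thesis .
qed


definition gate_out where "gate_out x k = (thr k \<le> int (lit_count x k))"
definition kick_factors where "kick_factors x l = map (\<lambda>k. (out_q k, \<lambda>b. if b \<and> gate_out x k then pi else 0)) (gates_at l)"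

lemma and_ctl_lt: "k < G \<Longrightarrow> u \<le> fanin k \<Longrightarrow> i < Suc K \<Longrightarrow> and_ctl k u i < N"
  by (auto simp: and_ctl_def intro!: out_q_lt reg_q_lt)

lemma and_ctl_neq[simp]: "and_ctl k u i \<noteq> par_q k' u' M" by (simp add: and_ctl_def)

lemma par_cnots_ok: "(a, t) \<in> set (par_cnots l) \<Longrightarrow> a < N \<and> t < N \<and> a \<noteq> t \<and> a \<notin> snd ` set (par_cnots l)"
proof -
  assume at: "(a, t) \<in> set (par_cnots l)"
  then obtain k u M i where h: "((k,u),M) \<in> set (mask_idx l)" "i < Suc K" "M!i" "a = and_ctl k u i" "t = par_q k u M"
    unfolding mem_par_cnots by blast
  have "a < N \<and> t < N \<and> a \<noteq> t" using h by (auto intro!: and_ctl_lt par_q_lt)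
  moreover have "a \<notin> snd ` set (par_cnots l)"
  proof
    assume "a \<in> snd ` set (par_cnots l)"
    then obtain a' where "(a', a) \<in> set (par_cnots l)" by force
    then show False unfolding mem_par_cnots using h by auto
  qed
  ultimately show ?thesis by blast
qed

lemma filter_par_cnots:
  assumes "((k,u),M) \<in> set (mask_idx l)"
  shows "filter (\<lambda>p. snd p = par_q k u M) (par_cnots l) = par_cnots_at ((k,u),M)"
proof -
  have "filter (\<lambda>p. snd p = par_q k u M) (par_cnots l) = concat (map (\<lambda>x. filter (\<lambda>p. snd p = par_q k u M) (par_cnots_at x)) (mask_idx l))"
    by (simp add: par_cnots_def filter_concat comp_def)
  also have "\<dots> = filter (\<lambda>p. snd p = par_q k u M) (par_cnots_at ((k,u),M))"
  proof (rule concat_single[OF dist_mask_idx assms(1)])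
    fix z assume z: "z \<in> set (mask_idx l)" "z \<noteq> ((k,u),M)"
    obtain k' u' M' where z': "z = ((k',u'),M')" by (metis prod.collapse)
    have "par_q k' u' M' \<noteq> par_q k u M"
      using z z' assms bin_val_inj[of M' M] by auto
    then show "filter (\<lambda>p. snd p = par_q k u M) (par_cnots_at z) = []"
      using z' by (auto simp: filter_empty_conv mem_par_cnots_at)
  qed
  also have "\<dots> = par_cnots_at ((k,u),M)"
    by (rule filter_True) (auto simp: mem_par_cnots_at par_cnots_at_def)
  finally show ?thesis .
qed

lemma cnot_sim_par:
  assumes y: "length y = N" and kuM: "((k,u),M) \<in> set (mask_idx l)"
  shows "cnot_sim (par_cnots l) y ! par_q k u M
           = (y ! par_q k u M \<noteq> odd (card {i. i < Suc K \<and> M!i \<and> y ! and_ctl k u i}))"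
proof -
  have ctl_not_tgt: "\<forall>(c,t)\<in>set (par_cnots l). c \<notin> snd ` set (par_cnots l) \<and> t < length y"
    using par_cnots_ok y by auto
  have kb: "k < G" "u \<le> fanin k" "length M = Suc K" using kuM by auto
  have "cnot_count (par_cnots l) y (par_q k u M) = length (filter (\<lambda>p. y ! fst p) (par_cnots_at ((k,u),M)))"
    by (simp add: cnot_count_alt filter_par_cnots[OF kuM])
  also have "\<dots> = length (filter (\<lambda>i. M!i \<and> y ! and_ctl k u i) [0..<Suc K])"
    by (simp add: par_cnots_at_def filter_map comp_def filter_filter del: upt_Suc)
  also have "\<dots> = card {i. i < Suc K \<and> M!i \<and> y ! and_ctl k u i}"
    by (simp add: length_filter_conv_card del: upt_Suc, intro arg_cong[where f=card] Collect_cong, auto simp del: upt_Suc)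
  finally show ?thesis
    using cnot_sim_nth_parity[OF ctl_not_tgt, of "par_q k u M"] par_q_lt[OF kb] y by simp
qed

lemma sum_masks: "sum_list (map F masks) = (\<Sum>M\<in>strs (Suc K). F M :: real)"
proof -
  have "set masks = strs (Suc K)" by auto
  then show ?thesis using sum_list_distinct_conv_sum_set[OF dist_masks, of F] by simp
qed

lemma diag_phase_and_layer: "diag_phase (and_layer l) z = sum_list (map (\<lambda>(k,u). sum_list (map (\<lambda>M. and_phase M (z ! par_q k u M) (z ! idle_q k u M)) masks)) (count_idx l))"
proof -
  have "diag_phase (and_layer l) z = sum_list (map (\<lambda>((k,u),M). and_phase M (z ! par_q k u M) (z ! idle_q k u M)) (mask_idx l))"
    unfolding diag_phase_def and_layer_def by (simp add: comp_def case_prod_unfold)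
  also have "\<dots> = sum_list (map (\<lambda>ku. sum_list (map (\<lambda>M. (\<lambda>((k,u),M). and_phase M (z ! par_q k u M) (z ! idle_q k u M)) (ku, M)) masks)) (count_idx l))"
    unfolding mask_idx_def by (rule sum_list_pairs)
  also have "\<dots> = sum_list (map (\<lambda>(k,u). sum_list (map (\<lambda>M. and_phase M (z ! par_q k u M) (z ! idle_q k u M)) masks)) (count_idx l))"
    by (intro arg_cong[where f=sum_list] map_cong refl) (auto split: prod.splits)
  finally show ?thesis .
qed

lemma theta_detects_count:
  assumes k: "k < G" and "s \<le> fanin k" "u \<le> fanin k" "s \<noteq> u"
  shows "\<exists>j<K. cis (theta j * (real s - real u)) = -1"
proof -
  define z where "z = int s - int u"
  have "z \<noteq> 0" using assms by (simp add: z_def)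
  then obtain j q where jq: "z = 2^j * q" "odd q" "2^j \<le> \<bar>z\<bar>" using two_adic by blast
  have "\<bar>z\<bar> \<le> int (fanin k)" using assms by (auto simp: z_def)
  also have "\<dots> \<le> int W" using fanin_le_W[OF k] by simp
  also have "\<dots> < 2 ^ K" using W_less_two_pow_K by (metis of_nat_less_iff of_nat_numeral of_nat_power)
  finally have "(2::int)^j < 2^K" using jq(3) by linarith
  then have "j < K" by (simp add: power_strict_increasing_iff)
  moreover have "theta j * (real s - real u) = pi * of_int q"
  proof -
    have "real s - real u = of_int z" by (simp add: z_def)
    also have "\<dots> = 2^j * of_int q" by (simp add: jq(1))
    finally show ?thesis by (simp add: theta_def)
  qed
  ultimately show ?thesis using cis_pi_odd[OF jq(2)] by auto
qed

lemma registers_zero_iff: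
  assumes y: "length y = N" and nz: "prod_state N \<phi> y \<noteq> 0" and ku: "(k,u) \<in> set (count_idx l)"
    and regs: "\<And>j. j < K \<Longrightarrow> \<phi> (reg_q k u j) = reg_factor (theta j * (real (lit_count x k) - real u))"
  shows "(\<forall>j<K. \<not> y ! reg_q k u j) \<longleftrightarrow> lit_count x k = u"
proof -
  have kb: "k < G" "u \<le> fanin k" using ku by auto
  have nz_reg: "reg_factor (theta j * (real (lit_count x k) - real u)) (y ! reg_q k u j) \<noteq> 0" if "j < K" for j
    using prod_state_nonzero_factor[OF nz y reg_q_lt[OF kb that]] regs[OF that] by simp
  show ?thesis
  proof
    assume zero: "\<forall>j<K. \<not> y ! reg_q k u j"
    show "lit_count x k = u"
    proof (rule ccontr)
      assume "lit_count x k \<noteq> u"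
      then obtain j where j: "j < K" "cis (theta j * (real (lit_count x k) - real u)) = -1"
        using theta_detects_count[OF kb(1) lit_count_le kb(2)] by blast
      then show False using nz_reg[OF j(1)] zero by (simp add: reg_factor_def)
    qed
  next
    assume eq: "lit_count x k = u"
    show "\<forall>j<K. \<not> y ! reg_q k u j"
    proof (intro allI impI)
      fix j assume "j < K"
      then show "\<not> y ! reg_q k u j" using nz_reg[of j] eq by (auto simp: reg_factor_def)
    qed
  qed
qed


lemma and_phase_sum:
  assumes y: "length y = N" and ku: "(k,u) \<in> set (count_idx l)"
    and fresh: "\<And>M. length M = Suc K \<Longrightarrow> \<not> y ! par_q k u M"
  shows "sum_list (map (\<lambda>M. and_phase M (cnot_sim (par_cnots l) y ! par_q k u M)
                                          (cnot_sim (par_cnots l) y ! idle_q k u M)) masks)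
       = (if y ! out_q k \<and> (\<forall>j<K. \<not> y ! reg_q k u j) then pi else 0)"
proof -
  let ?z = "cnot_sim (par_cnots l) y"
  define bb where "bb i = (y ! and_ctl k u i \<noteq> (1 \<le> i))" for i
  have term_eq: "and_phase M (?z ! par_q k u M) (?z ! idle_q k u M)
      = pi / 2 ^ K * ((-1) ^ (card {i. i < Suc K \<and> M!i} + 1) *
                       (if odd (card {i. i < Suc K \<and> M!i \<and> bb i}) then 1 else 0))"
    if M: "length M = Suc K" for M
  proof -
    have kuM: "((k,u),M) \<in> set (mask_idx l)" using ku M by simp
    have "?z ! par_q k u M = odd (card {i. i < Suc K \<and> M!i \<and> y ! and_ctl k u i})"
      using cnot_sim_par[OF y kuM] fresh[OF M] by simp
    moreover have "(odd (card {i. i < Suc K \<and> M!i \<and> y ! and_ctl k u i}) \<noteq> and_neg M)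
        = odd (card {i. i < Suc K \<and> M!i \<and> bb i})"
      unfolding and_neg_def bb_def by (rule odd_card_xor[symmetric])
    ultimately show ?thesis by (simp add: and_phase_def and_coef_def)
  qed
  have "sum_list (map (\<lambda>M. and_phase M (?z ! par_q k u M) (?z ! idle_q k u M)) masks)
      = pi / 2 ^ K * (\<Sum>M\<in>strs (Suc K). (-1) ^ (card {i. i < Suc K \<and> M!i} + 1) *
                        (if odd (card {i. i < Suc K \<and> M!i \<and> bb i}) then 1 else 0))"
    unfolding sum_masks by (simp add: term_eq sum_distrib_left)
  also have "\<dots> = (if \<forall>i<Suc K. bb i then pi else 0)"
    using parity_sum_and[of "Suc K" bb] by simp
  also have "(\<forall>i<Suc K. bb i) \<longleftrightarrow> y ! out_q k \<and> (\<forall>j<K. \<not> y ! reg_q k u j)"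
    unfolding All_less_Suc2 bb_def and_ctl_def by simp
  finally show ?thesis .
qed

lemma and_layer_phase:
  assumes y: "length y = N" and nz: "prod_state N \<phi> y \<noteq> 0"
    and fresh: "\<And>k u M. k < G \<Longrightarrow> layer k = l \<Longrightarrow> u \<le> fanin k \<Longrightarrow> length M = Suc K \<Longrightarrow> \<phi> (par_q k u M) = ket1 False"
    and regs: "\<And>k u j. (k,u,j) \<in> set (reg_idx l) \<Longrightarrow> \<phi> (reg_q k u j) = reg_factor (theta j * (real (lit_count x k) - real u))"
  shows "diag_phase (and_layer l) (cnot_sim (par_cnots l) y) = phase_sum (kick_factors x l) y"
proof -
  have inner: "sum_list (map (\<lambda>M. and_phase M (cnot_sim (par_cnots l) y ! par_q k u M)
                                             (cnot_sim (par_cnots l) y ! idle_q k u M)) masks)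
       = (if y ! out_q k \<and> lit_count x k = u then pi else 0)" if ku: "(k,u) \<in> set (count_idx l)" for k u
  proof -
    have kb: "k < G" "layer k = l" "u \<le> fanin k" using ku by auto
    have "\<not> y ! par_q k u M" if M: "length M = Suc K" for M
      using prod_state_basis_factor[OF nz y par_q_lt[OF kb(1,3) M] fresh[OF kb M]] by simp
    moreover have "(\<forall>j<K. \<not> y ! reg_q k u j) \<longleftrightarrow> lit_count x k = u"
      using regs ku by (intro registers_zero_iff[OF y nz ku]) simp
    ultimately show ?thesis using and_phase_sum[OF y ku] by simp
  qed
  have "diag_phase (and_layer l) (cnot_sim (par_cnots l) y)
      = sum_list (map (\<lambda>k. sum_list (map (\<lambda>u. if y ! out_q k \<and> lit_count x k = u then pi else 0) (counts_from k))) (gates_at l))"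
    unfolding diag_phase_and_layer count_idx_def sum_list_pairs
    by (intro arg_cong[where f=sum_list] map_cong refl) (auto simp: inner)
  also have "\<dots> = sum_list (map (\<lambda>k. if y ! out_q k \<and> gate_out x k then pi else 0) (gates_at l))"
  proof (intro arg_cong[where f=sum_list] map_cong refl)
    fix k assume k: "k \<in> set (gates_at l)"
    have "sum_list (map (\<lambda>u. if y ! out_q k \<and> lit_count x k = u then pi else 0) (counts_from k))
        = (\<Sum>u\<in>set (counts_from k). if lit_count x k = u then (if y ! out_q k then pi else 0) else 0)"
      by (simp add: sum_list_distinct_conv_sum_set[OF dist_counts_from])
    also have "\<dots> = (if y ! out_q k \<and> gate_out x k then pi else 0)"
      using lit_count_le[of x k] by (auto simp: sum.delta gate_out_def)
    finally show "sum_list (map (\<lambda>u. if y ! out_q k \<and> lit_count x k = u then pi else 0) (counts_from k))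
        = (if y ! out_q k \<and> gate_out x k then pi else 0)" .
  qed
  also have "\<dots> = phase_sum (kick_factors x l) y"
    by (simp add: phase_sum_def kick_factors_def comp_def)
  finally show ?thesis .
qed


lemma dist_had_first: "distinct (had_first l)"
  unfolding had_first_def using dist_gates_at dist_reg_idx
  by (auto simp: distinct_map inj_on_def case_prod_unfold)

lemma dist_had_regs: "distinct (had_regs l)"
  unfolding had_regs_def using dist_reg_idx by (auto simp: distinct_map inj_on_def case_prod_unfold)

lemma dist_had_outs: "distinct (had_outs l)"
  unfolding had_outs_def using dist_gates_at by (auto simp: distinct_map inj_on_def)

lemma set_had_first: "q \<in> set (had_first l) \<longleftrightarrow> (\<exists>k. k < G \<and> layer k = l \<and> (q = out_q k \<or> (\<exists>u j. u \<le> fanin k \<and> thr k \<le> int u \<and> j < K \<and> q = reg_q k u j)))"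
  unfolding had_first_def set_append set_map Un_iff mem_image_case_prod3 by auto

lemma set_had_regs: "q \<in> set (had_regs l) \<longleftrightarrow> (\<exists>k u j. (k,u,j) \<in> set (reg_idx l) \<and> q = reg_q k u j)"
  unfolding had_regs_def set_map mem_image_case_prod3 by blast

lemma set_had_outs: "q \<in> set (had_outs l) \<longleftrightarrow> (\<exists>k. k < G \<and> layer k = l \<and> q = out_q k)"
  unfolding had_outs_def by auto

lemma fst_count_factors: "q \<in> fst ` set (count_factors x l) \<longleftrightarrow> (\<exists>k u j. (k,u,j) \<in> set (reg_idx l) \<and> q = reg_q k u j)"
proof -
  have e: "fst \<circ> (\<lambda>(k,u,j). (reg_q k u j, \<lambda>r. if r then theta j * (real (lit_count x k) - real u) else 0)) = (\<lambda>(k,u,j). reg_q k u j)"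
    by (auto simp: fun_eq_iff)
  have "fst ` set (count_factors x l) = (\<lambda>(k,u,j). reg_q k u j) ` set (reg_idx l)"
    unfolding count_factors_def set_map image_comp e ..
  then show ?thesis by (simp only: mem_image_case_prod3)
qed

lemma fst_kick_factors: "q \<in> fst ` set (kick_factors x l) \<longleftrightarrow> (\<exists>k. k < G \<and> layer k = l \<and> q = out_q k)"
  unfolding kick_factors_def by (force simp: image_iff)

lemma dist_count_factors: "distinct (map fst (count_factors x l))"
  unfolding count_factors_def using dist_reg_idx by (auto simp: distinct_map inj_on_def case_prod_unfold comp_def)

lemma dist_kick_factors: "distinct (map fst (kick_factors x l))"
  unfolding kick_factors_def using dist_gates_at by (auto simp: distinct_map inj_on_def comp_def)

lemma diags_ok_count_layer: "diags_ok N (count_layer l)"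
  unfolding diags_ok_def count_layer_def by (auto intro!: reg_copy_q_lt lit_copy_q_lt simp del: mem_copy_idx) (auto)

lemma diags_ok_and_layer: "diags_ok N (and_layer l)"
  unfolding diags_ok_def and_layer_def by (auto intro!: par_q_lt idle_q_lt simp del: mem_mask_idx) (auto)

lemma cnots_ok_copy_cnots: "cnots_ok N (copy_cnots l)" using copy_cnots_ok by (auto simp: cnots_ok_def)
lemma cnots_ok_par_cnots: "cnots_ok N (par_cnots l)" using par_cnots_ok by (auto simp: cnots_ok_def)

definition block_factors where
  "block_factors x l \<phi> = had_on (had_outs l) (mult_phases (kick_factors x l)
     (had_on (had_regs l) (mult_phases (count_factors x l) (had_on (had_first l) \<phi>))))"

lemma block_inv_fresh:
  assumes "block_inv x b l \<phi>" "k < G" "layer k = l"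
  shows "\<phi> (out_q k) = ket1 False" "\<phi> (reg_q k u j) = ket1 False" "\<phi> (reg_copy_q k u j c) = ket1 False"
    "\<phi> (lit_copy_q k u j c) = ket1 False" "\<phi> (par_q k u M) = ket1 False"
  using assms by (auto simp: block_inv_def anc_defs)

lemma wire_q_not_had_first:
  assumes "k < G" "c < fanin k"
  shows "wire_q (lit_wire k c) \<notin> set (had_first (layer k))"
proof
  assume "wire_q (lit_wire k c) \<in> set (had_first (layer k))"
  then obtain k' where k': "layer k' = layer k" "wire_q (lit_wire k c) = out_q k'"
    by (auto simp: set_had_first)
  have not_input: "\<not> lit_wire k c < m"
    using k'(2) qubits_gt_m(1)[of k'] by (auto simp: wire_q_def)
  then have "k' = lit_wire k c - m" using k'(2) by (simp add: wire_q_def)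
  then show False using lit_wire_layer[OF assms] not_input k'(1) by simp
qed

lemma had_first_factors:
  assumes inv: "block_inv x b l \<phi>" and x: "length x = m" and k: "k < G" "layer k = l"
  shows "had_on (had_first l) \<phi> (reg_copy_q k u j c) = ket1 False"
    and "had_on (had_first l) \<phi> (lit_copy_q k u j c) = ket1 False"
    and "had_on (had_first l) \<phi> (par_q k u M) = ket1 False"
    and "c < fanin k \<Longrightarrow> had_on (had_first l) \<phi> (wire_q (lit_wire k c)) = ket1 (wval x ! lit_wire k c)"
  using block_inv_fresh[OF inv k] wire_q_not_had_first[OF k(1)] block_inv_wire[OF inv x k] k(2)
  by (auto simp: had_on_def set_had_first)

lemma count_stage:
  assumes inv: "block_inv x b l \<phi>" and x: "length x = m"
  shows "gates_apply N (conj_diag (copy_cnots l) (count_layer l)) (prod_state N (had_on (had_first l) \<phi>))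
       = prod_state N (mult_phases (count_factors x l) (had_on (had_first l) \<phi>))"
proof (rule conj_diag_prod_state[OF cnots_ok_copy_cnots diags_ok_count_layer])
  show "\<forall>p\<in>set (count_factors x l). fst p < N"
    using fst_count_factors by (force intro!: reg_q_lt)
  show "diag_phase (count_layer l) (cnot_sim (copy_cnots l) y) = phase_sum (count_factors x l) y"
    if "length y = N" "prod_state N (had_on (had_first l) \<phi>) y \<noteq> 0" for y
    using count_layer_phase[OF that] had_first_factors[OF inv x] by simp
qed

lemma had_regs_factors:
  assumes inv: "block_inv x b l \<phi>" and x: "length x = m" and k: "k < G" "layer k = l"
  defines "\<phi>3 \<equiv> had_on (had_regs l) (mult_phases (count_factors x l) (had_on (had_first l) \<phi>))"
  shows "\<phi>3 (par_q k u M) = ket1 False"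
    and "\<phi>3 (out_q k) = had1 (ket1 False)"
    and "(k,u,j) \<in> set (reg_idx l) \<Longrightarrow> \<phi>3 (reg_q k u j) = reg_factor (theta j * (real (lit_count x k) - real u))"
proof -
  show "\<phi>3 (par_q k u M) = ket1 False" "\<phi>3 (out_q k) = had1 (ket1 False)"
    using had_first_factors(3)[OF inv x k] block_inv_fresh(1)[OF inv k] k
    by (auto simp: \<phi>3_def had_on_def set_had_regs set_had_first mult_phases_other fst_count_factors)
  assume kuj: "(k,u,j) \<in> set (reg_idx l)"
  have mem: "(reg_q k u j, \<lambda>r. if r then theta j * (real (lit_count x k) - real u) else 0) \<in> set (count_factors x l)"
    using kuj unfolding count_factors_def set_map by (intro image_eqI[where x="(k,u,j)"]) simp_all
  have "had_on (had_first l) \<phi> (reg_q k u j) = had1 (ket1 False)"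
    using kuj block_inv_fresh(2)[OF inv k] by (auto simp: had_on_def set_had_first)
  then have "mult_phases (count_factors x l) (had_on (had_first l) \<phi>) (reg_q k u j)
      = (\<lambda>b. cis (if b then theta j * (real (lit_count x k) - real u) else 0) * had1 (ket1 False) b)"
    using mult_phases_at[OF dist_count_factors mem] by simp
  moreover have "reg_q k u j \<in> set (had_regs l)"
    using kuj by (auto simp: set_had_regs simp del: mem_reg_idx)
  ultimately show "\<phi>3 (reg_q k u j) = reg_factor (theta j * (real (lit_count x k) - real u))"
    by (simp add: \<phi>3_def had_on_def had_phase_had_ket0)
qed

lemma kick_stage:
  assumes inv: "block_inv x b l \<phi>" and x: "length x = m"
  defines "\<phi>3 \<equiv> had_on (had_regs l) (mult_phases (count_factors x l) (had_on (had_first l) \<phi>))"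
  shows "gates_apply N (conj_diag (par_cnots l) (and_layer l)) (prod_state N \<phi>3)
       = prod_state N (mult_phases (kick_factors x l) \<phi>3)"
proof (rule conj_diag_prod_state[OF cnots_ok_par_cnots diags_ok_and_layer])
  show "\<forall>p\<in>set (kick_factors x l). fst p < N"
    using fst_kick_factors by (force intro!: out_q_lt)
  show "diag_phase (and_layer l) (cnot_sim (par_cnots l) y) = phase_sum (kick_factors x l) y"
    if "length y = N" "prod_state N \<phi>3 y \<noteq> 0" for y
    using and_layer_phase[OF that] had_regs_factors[OF inv x, folded \<phi>3_def] by auto
qed

lemma block_prod_state:
  assumes inv: "block_inv x b l \<phi>" and x: "length x = m"
  shows "gates_apply N (block l) (prod_state N \<phi>) = prod_state N (block_factors x l \<phi>)"
proof -
  have "\<forall>q\<in>set (had_first l). q < N" "\<forall>q\<in>set (had_regs l). q < N" "\<forall>q\<in>set (had_outs l). q < N"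
    by (auto simp: set_had_first set_had_regs set_had_outs intro!: out_q_lt reg_q_lt)
  then show ?thesis
    using count_stage[OF inv x] kick_stage[OF inv x]
    by (simp add: block_def block_factors_def gates_apply_Hads dist_had_first dist_had_regs dist_had_outs)
qed

lemma block_factors_other:
  assumes "\<not> (\<exists>k. k < G \<and> layer k = l \<and> (q = out_q k \<or> (\<exists>u j. q = reg_q k u j)))"
  shows "block_factors x l \<phi> q = \<phi> q"
  using assms
  by (auto simp: block_factors_def had_on_def set_had_first set_had_regs set_had_outs
      mult_phases_other fst_count_factors fst_kick_factors)

lemma block_factors_out:
  assumes inv: "block_inv x b l \<phi>" and x: "length x = m" and k: "k < G" "layer k = l"
  shows "block_factors x l \<phi> (out_q k) = ket1 (wval x ! (m + k))"
proof -
  have mem: "(out_q k, \<lambda>b. if b \<and> gate_out x k then pi else 0) \<in> set (kick_factors x l)"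
    using k unfolding kick_factors_def set_map by (intro image_eqI[where x=k]) simp_all
  have "block_factors x l \<phi> (out_q k) = ket1 (gate_out x k)"
    using had_regs_factors(2)[OF inv x k] mult_phases_at[OF dist_kick_factors mem] k
    by (simp add: block_factors_def had_on_def set_had_outs had_kick_had_ket0)
  then show ?thesis using wval_gate[OF x k(1)] by (simp add: gate_out_def)
qed

lemma block_inv_step:
  assumes inv: "block_inv x b l \<phi>" and x: "length x = m"
  shows "block_inv x b (Suc l) (block_factors x l \<phi>)"
proof -
  have other: "block_factors x l \<phi> q = \<phi> q"
    if "\<And>k. k < G \<Longrightarrow> layer k = l \<Longrightarrow> q \<noteq> out_q k \<and> (\<forall>u j. q \<noteq> reg_q k u j)" for q
    using that by (intro block_factors_other) blast
  show ?thesis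
    unfolding block_inv_def
  proof (intro conjI allI impI)
    show "block_factors x l \<phi> w = ket1 (x!w)" if "w < m" for w
      using other[of w] inv that by (simp add: block_inv_def)
    show "block_factors x l \<phi> m = ket1 b"
      using other[of m] inv by (simp add: block_inv_def)
    show "block_factors x l \<phi> (out_q k) = ket1 (wval x ! (m + k))" if "k < G" "layer k < Suc l" for k
    proof (cases "layer k = l")
      case True
      then show ?thesis using block_factors_out[OF inv x that(1)] by simp
    next
      case False
      then show ?thesis using other[of "out_q k"] inv that by (auto simp: block_inv_def)
    qed
    show "block_factors x l \<phi> (anc t k u j c) = ket1 False" if "k < G" "Suc l \<le> layer k" for k t u j c
    proof -
      have "block_factors x l \<phi> (anc t k u j c) = \<phi> (anc t k u j c)"
        by (rule other) (use that in \<open>auto simp: anc_defs\<close>)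
      then show ?thesis using inv that by (simp add: block_inv_def)
    qed
  qed
qed

lemma blocks_prod_state:
  assumes x: "length x = m" and inv: "block_inv x b 1 \<phi>"
  shows "\<exists>\<phi>'. gates_apply N (concat (map block [1..<Suc n])) (prod_state N \<phi>) = prod_state N \<phi>' \<and>
              block_inv x b (Suc n) \<phi>'"
proof (induction n)
  case 0
  then show ?case using inv by auto
next
  case (Suc n)
  then obtain \<phi>' where "gates_apply N (concat (map block [1..<Suc n])) (prod_state N \<phi>) = prod_state N \<phi>'"
    "block_inv x b (Suc n) \<phi>'" by blast
  then show ?case using block_prod_state[OF _ x] block_inv_step[OF _ x] by auto
qed


definition cliff_in where "cliff_in l = map Had (had_first l) @ map cx_gate (copy_cnots l)"
definition cliff_mid where "cliff_mid l = map cx_gate (rev (copy_cnots l)) @ map Had (had_regs l) @ map cx_gate (par_cnots l)"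
definition cliff_out where "cliff_out l = map cx_gate (rev (par_cnots l)) @ map Had (had_outs l)"
definition block_segs where "block_segs l = [Layer (count_layer l), Cliff (cliff_mid l), Layer (and_layer l)]"
definition inner_segs where
  "inner_segs = concat (map (\<lambda>l. block_segs l @ [Cliff (cliff_out l @ cliff_in (Suc l))]) [1..<d])"
definition compute_segs where "compute_segs = [Cliff (cliff_in 1)] @ inner_segs @ block_segs d"
definition copy_out where "copy_out = CX (wire_q outw) m"
definition noclean_segs where "noclean_segs = compute_segs @ [Cliff (cliff_out d @ [copy_out])]"
definition forward_segs where "forward_segs = compute_segs @ [Cliff (cliff_out d)]"
text \<open>The Clifford segments on either side of the copy gate are merged, so the clean circuit has
  \<open>8 d + 1\<close> segments.\<close>

definition clean_segs where "clean_segs = compute_segs @ [Cliff (cliff_out d @ [copy_out] @ rev (map gate_inv (cliff_out d)))] @ rev (map seg_inv compute_segs)"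

lemma block_eq: "block l = cliff_in l @ concat (map seg_gates (block_segs l)) @ cliff_out l"
  by (simp add: block_def conj_diag_def cliff_in_def cliff_mid_def cliff_out_def block_segs_def)

lemma seg_gates_compute_segs:
  assumes "1 \<le> n"
  shows "cliff_in 1 @ concat (map (\<lambda>l. concat (map seg_gates (block_segs l)) @ cliff_out l @ cliff_in (Suc l)) [1..<n]) @ concat (map seg_gates (block_segs n)) @ cliff_out n @ T
       = concat (map block [1..<Suc n]) @ T"
  using assms
proof (induction n arbitrary: T rule: dec_induct)
  case base
  then show ?case by (simp add: block_eq)
next
  case (step n)
  have "cliff_in 1 @ concat (map (\<lambda>l. concat (map seg_gates (block_segs l)) @ cliff_out l @ cliff_in (Suc l)) [1..<Suc n]) @ concat (map seg_gates (block_segs (Suc n))) @ cliff_out (Suc n) @ T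
      = cliff_in 1 @ concat (map (\<lambda>l. concat (map seg_gates (block_segs l)) @ cliff_out l @ cliff_in (Suc l)) [1..<n]) @ concat (map seg_gates (block_segs n)) @ cliff_out n @ (cliff_in (Suc n) @ concat (map seg_gates (block_segs (Suc n))) @ cliff_out (Suc n) @ T)"
    using step.hyps by simp
  also have "\<dots> = concat (map block [1..<Suc n]) @ (cliff_in (Suc n) @ concat (map seg_gates (block_segs (Suc n))) @ cliff_out (Suc n) @ T)"
    by (rule step.IH)
  also have "\<dots> = concat (map block [1..<Suc (Suc n)]) @ T"
    by (simp add: block_eq)
  finally show ?case .
qed

lemma seg_gates_concat_block_segs: "concat (map seg_gates (concat (map (\<lambda>l. block_segs l @ [Cliff (cliff_out l @ cliff_in (Suc l))]) xs)))
   = concat (map (\<lambda>l. concat (map seg_gates (block_segs l)) @ cliff_out l @ cliff_in (Suc l)) xs)"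
  by (induction xs) (simp_all add: block_segs_def)

lemma seg_gates_forward_segs: "1 \<le> d \<Longrightarrow> concat (map seg_gates forward_segs) = concat (map block [1..<Suc d])"
  using seg_gates_compute_segs[of d "[]"]
  by (simp add: forward_segs_def compute_segs_def inner_segs_def seg_gates_concat_block_segs)

lemma seg_gates_noclean_segs: "concat (map seg_gates noclean_segs) = concat (map seg_gates forward_segs) @ [copy_out]"
  by (simp add: noclean_segs_def forward_segs_def)

lemma seg_gates_clean_segs: "concat (map seg_gates clean_segs) = concat (map seg_gates forward_segs) @ [copy_out] @ concat (map seg_gates (rev (map seg_inv forward_segs)))"
  by (simp add: clean_segs_def forward_segs_def)

definition init_factors where "init_factors x b q = (if q < m then ket1 (x!q) else if q = m then ket1 b else ket1 False)"

lemma ket_input_prod_state: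
  assumes x: "length x = m"
  shows "ket (x @ [b] @ replicate n_anc False) = prod_state N (init_factors x b)"
proof -
  have "ket (x @ [b] @ replicate n_anc False) = prod_state N (\<lambda>i. ket1 ((x @ [b] @ replicate n_anc False) ! i))"
    by (rule ket_prod_state) (simp add: x N_def)
  also have "\<dots> = prod_state N (init_factors x b)"
    by (rule prod_state_cong) (auto simp: init_factors_def x nth_append N_def)
  finally show ?thesis .
qed

lemma block_inv_init: "length x = m \<Longrightarrow> block_inv x b 1 (init_factors x b)"
  unfolding block_inv_def by (auto simp: init_factors_def dest: wf_layer)

lemma block_inv_final:
  assumes x: "length x = m" and inv: "block_inv x b (Suc d) \<phi>"
  shows "\<phi> (wire_q outw) = ket1 (wval x ! outw)" "\<phi> m = ket1 b"
proof -
  show "\<phi> m = ket1 b" using inv by (simp add: block_inv_def)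
  show "\<phi> (wire_q outw) = ket1 (wval x ! outw)"
  proof (cases "outw < m")
    case True then show ?thesis using inv x by (simp add: wire_q_def block_inv_def wval_input)
  next
    case False
    have k1: "outw - m < G" using wf_out False by simp
    then have k: "outw - m < G" "layer (outw - m) < Suc d" using wf_layer[OF k1] by auto
    then show ?thesis using inv False by (simp add: wire_q_def block_inv_def)
  qed
qed

lemma cliff_in_ok: "g \<in> set (cliff_in l) \<Longrightarrow> is_cliff_gate g \<and> gate_ok N g \<and> m \<notin> gate_qubits g"
proof -
  assume g: "g \<in> set (cliff_in l)"
  show ?thesis
  proof (cases "g \<in> set (map Had (had_first l))")
    case True
    then obtain q where q: "g = Had q" "q \<in> set (had_first l)" by auto
    then show ?thesis by (auto simp: set_had_first intro!: out_q_lt reg_q_lt)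
  next
    case False
    then obtain a t where p: "g = CX a t" "(a,t) \<in> set (copy_cnots l)" using g by (auto simp: cliff_in_def cx_gate_def)
    have "a \<noteq> m" "t \<noteq> m" using p(2) unfolding mem_copy_cnots by auto
    then show ?thesis using p copy_cnots_ok[OF p(2)] by auto
  qed
qed

lemma copy_cnots_avoid_output: "(a,t) \<in> set (copy_cnots l) \<Longrightarrow> a \<noteq> m \<and> t \<noteq> m"
  unfolding mem_copy_cnots by auto

lemma par_cnots_avoid_output: "(a,t) \<in> set (par_cnots l) \<Longrightarrow> a \<noteq> m \<and> t \<noteq> m"
  unfolding mem_par_cnots by (auto simp: and_ctl_def split: if_splits)

lemma cx_gate_copy_cnots_ok: "p \<in> set (copy_cnots l) \<Longrightarrow> is_cliff_gate (cx_gate p) \<and> gate_ok N (cx_gate p) \<and> m \<notin> gate_qubits (cx_gate p)"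
  using copy_cnots_ok[of "fst p" "snd p" l] copy_cnots_avoid_output[of "fst p" "snd p" l] by (simp add: cx_gate_def)

lemma cx_gate_par_cnots_ok: "p \<in> set (par_cnots l) \<Longrightarrow> is_cliff_gate (cx_gate p) \<and> gate_ok N (cx_gate p) \<and> m \<notin> gate_qubits (cx_gate p)"
  using par_cnots_ok[of "fst p" "snd p" l] par_cnots_avoid_output[of "fst p" "snd p" l] by (simp add: cx_gate_def)

lemma cliff_mid_ok: "g \<in> set (cliff_mid l) \<Longrightarrow> is_cliff_gate g \<and> gate_ok N g \<and> m \<notin> gate_qubits g"
  unfolding cliff_mid_def using cx_gate_copy_cnots_ok cx_gate_par_cnots_ok by (auto simp: set_had_regs intro!: reg_q_lt)

lemma cliff_out_ok: "g \<in> set (cliff_out l) \<Longrightarrow> is_cliff_gate g \<and> gate_ok N g \<and> m \<notin> gate_qubits g"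
  unfolding cliff_out_def using cx_gate_par_cnots_ok by (auto simp: set_had_outs intro!: out_q_lt)

lemma count_layer_dist: "distinct (concat (map (\<lambda>(i,j,f). [i,j]) (count_layer l)))"
proof -
  have e: "concat (map (\<lambda>(i,j,f). [i,j]) (count_layer l)) =
     concat (map (\<lambda>x. [(\<lambda>((k,u,j),c). reg_copy_q k u j c) x, (\<lambda>((k,u,j),c). lit_copy_q k u j c) x]) (copy_idx l))"
    unfolding count_layer_def by (simp add: comp_def case_prod_unfold)
  show ?thesis unfolding e
    by (rule distinct_concat_pair_lists[OF dist_copy_idx]) (auto simp: inj_on_def case_prod_unfold)
qed

lemma and_layer_dist: "distinct (concat (map (\<lambda>(i,j,f). [i,j]) (and_layer l)))"
proof -
  have e: "concat (map (\<lambda>(i,j,f). [i,j]) (and_layer l)) =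
     concat (map (\<lambda>x. [(\<lambda>((k,u),M). par_q k u M) x, (\<lambda>((k,u),M). idle_q k u M) x]) (mask_idx l))"
    unfolding and_layer_def by (simp add: comp_def case_prod_unfold)
  have inj: "M = M'" if "length M = Suc K" "length M' = Suc K" "bin_val M = bin_val M'" for M M'
    using bin_val_inj that by simp
  show ?thesis unfolding e
    by (rule distinct_concat_pair_lists[OF dist_mask_idx]) (auto simp: inj_on_def case_prod_unfold intro: inj)
qed

lemma count_layer_avoids_output: "g \<in> set (map diag_gate (count_layer l)) \<Longrightarrow> m \<notin> gate_qubits g"
  by (auto simp: count_layer_def diag_gate_def)
lemma and_layer_avoids_output: "g \<in> set (map diag_gate (and_layer l)) \<Longrightarrow> m \<notin> gate_qubits g"
  by (auto simp: and_layer_def diag_gate_def)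

definition seg_ok_off_output where "seg_ok_off_output s \<longleftrightarrow> seg_ok N s \<and> (\<forall>g\<in>set (seg_gates s). m \<notin> gate_qubits g)"

lemma seg_ok_off_output_blocks:
  "seg_ok_off_output (Cliff (cliff_in l))" "seg_ok_off_output (Cliff (cliff_mid l))" "seg_ok_off_output (Layer (count_layer l))" "seg_ok_off_output (Layer (and_layer l))"
  "seg_ok_off_output (Cliff (cliff_out l @ cliff_in l'))" "seg_ok_off_output (Cliff (cliff_out l))"
  using cliff_in_ok cliff_mid_ok cliff_out_ok diags_ok_count_layer diags_ok_and_layer count_layer_dist and_layer_dist count_layer_avoids_output and_layer_avoids_output
  unfolding seg_ok_off_output_def by (auto simp del: set_map) blast+

lemma compute_segs_ok: "s \<in> set compute_segs \<Longrightarrow> seg_ok N s \<and> (\<forall>g\<in>set (seg_gates s). m \<notin> gate_qubits g)"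
proof -
  assume s: "s \<in> set compute_segs"
  have "seg_ok_off_output s" using s unfolding compute_segs_def inner_segs_def block_segs_def by (auto simp: seg_ok_off_output_blocks)
  then show ?thesis by (simp add: seg_ok_off_output_def)
qed

lemma copy_out_ok: "is_cliff_gate copy_out \<and> gate_ok N copy_out"
  using wire_q_lt[OF wf_out] m_lt by (simp add: copy_out_def)

lemma noclean_segs_ok: "s \<in> set noclean_segs \<Longrightarrow> seg_ok N s"
  unfolding noclean_segs_def using compute_segs_ok cliff_out_ok copy_out_ok by auto

lemma forward_segs_ok: "s \<in> set forward_segs \<Longrightarrow> seg_ok N s \<and> (\<forall>g\<in>set (seg_gates s). m \<notin> gate_qubits g)"
  unfolding forward_segs_def using compute_segs_ok cliff_out_ok by auto

lemma clean_segs_ok: "s \<in> set clean_segs \<Longrightarrow> seg_ok N s"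
proof -
  assume s: "s \<in> set clean_segs"
  have mid: "seg_ok N (Cliff (cliff_out d @ [copy_out] @ rev (map gate_inv (cliff_out d))))"
    using cliff_out_ok copy_out_ok by (auto elim!: is_cliff_gate.elims) (metis is_cliff_gate.elims(2) gate_inv.simps(1,2) gate_ok.simps(1,2) cliff_out_ok)+
  show ?thesis using s mid compute_segs_ok seg_ok_inv unfolding clean_segs_def by auto
qed

lemma length_inner_segs: "length inner_segs = 4 * (d - 1)"
  by (simp add: inner_segs_def length_concat block_segs_def comp_def sum_list_triv)

lemma length_compute_segs: "1 \<le> d \<Longrightarrow> length compute_segs = 4 * d"
  using length_inner_segs by (simp add: compute_segs_def block_segs_def)

lemma alternating_compute_segs:
  assumes d: "1 \<le> d"
  shows "alternating 0 compute_segs"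
proof -
  have inner: "alternating 1 inner_segs"
    unfolding inner_segs_def by (rule alternating_concat) (simp add: block_segs_def alternating_Cons)
  have "alternating 1 (block_segs d)" by (simp add: block_segs_def alternating_Cons)
  then have last: "alternating (1 + 4 * (d - 1)) (block_segs d)"
    using alternating_shift_even[of "4 * (d - 1)" 1 "block_segs d"] by simp
  show ?thesis unfolding compute_segs_def
    by (intro alternating_append) (use inner last length_inner_segs in \<open>simp_all add: alternating_def add.commute\<close>)
qed

definition noclean_circuit where "noclean_circuit = seq_op N (map (seg_op N) noclean_segs)"
definition clean_circuit where "clean_circuit = seq_op N (map (seg_op N) clean_segs)"

lemma forward_prod_state:
  assumes d: "1 \<le> d" and x: "length x = m"
  obtains \<phi> where "gates_apply N (concat (map seg_gates forward_segs)) (ket (x @ [b] @ replicate n_anc False))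
                      = prod_state N \<phi>"
    and "\<phi> (wire_q outw) = ket1 (tc_eval x (gs, outw))" and "\<phi> m = ket1 b"
proof -
  obtain \<phi> where F: "gates_apply N (concat (map block [1..<Suc d])) (prod_state N (init_factors x b)) = prod_state N \<phi>"
      "block_inv x b (Suc d) \<phi>"
    using blocks_prod_state[OF x block_inv_init[OF x]] by blast
  show thesis
    using that[of \<phi>] F(1) block_inv_final[OF x F(2)] seg_gates_forward_segs[OF d] ket_input_prod_state[OF x]
    by (simp add: tc_eval_wval)
qed

lemma noclean_acq:
  assumes d: "1 \<le> d"
  shows "acq_circuit N (4 * d) 1 noclean_circuit"
  unfolding noclean_circuit_def
proof (rule acq_of_segs)
  show "length noclean_segs = 4 * d + 1" using length_compute_segs[OF d] by (simp add: noclean_segs_def)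
  show "alternating 0 noclean_segs" unfolding noclean_segs_def
    by (rule alternating_append[OF alternating_compute_segs[OF d]]) (simp add: alternating_Cons length_compute_segs[OF d])
  show "\<forall>s\<in>set noclean_segs. seg_ok N s" using noclean_segs_ok by blast
qed

lemma noclean_computes:
  assumes d: "1 \<le> d" and f: "\<forall>x. length x = m \<longrightarrow> tc_eval x (gs, outw) = f x"
  shows "noncleanly_computes m n_anc noclean_circuit f"
  unfolding noncleanly_computes_def
proof (intro allI impI)
  fix x :: "bool list" assume x: "length x = m"
  let ?z = "x @ [False] @ replicate n_anc False"
  obtain \<phi> where F: "gates_apply N (concat (map seg_gates forward_segs)) (ket ?z) = prod_state N \<phi>"
      "\<phi> (wire_q outw) = ket1 (f x)" "\<phi> m = ket1 False"
    using forward_prod_state[OF d x] f x by metis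
  have "apply_op N noclean_circuit (ket ?z) = gate_apply N copy_out (prod_state N \<phi>)"
    unfolding noclean_circuit_def using noclean_segs_ok x F(1)
    by (subst apply_seq_op_segs) (auto simp: seg_gates_noclean_segs N_def intro: state_on_ket)
  also have "\<dots> = prod_state N (\<phi>(m := (\<lambda>b. \<phi> m (b \<noteq> f x))))"
    unfolding copy_out_def
    by (rule prod_state_CX_basis[where \<phi>=\<phi> and c="wire_q outw" and t=m and a="f x", OF wire_q_lt[OF wf_out] m_lt wire_q_neq(1)[of outw] F(2)])
  also have "(\<lambda>b. \<phi> m (b \<noteq> f x)) = ket1 (f x)" using F(3) by (auto simp: ket1_def fun_eq_iff)
  finally have result: "apply_op N noclean_circuit (ket ?z) = prod_state N (\<phi>(m := ket1 (f x)))" .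
  obtain \<psi> where "prod_state N (\<phi>(m := ket1 (f x)))
      = (\<lambda>y. if length y = N \<and> y ! m = f x then \<psi> (take m y @ drop (m + 1) y) else 0)"
    using prod_state_basis_split[OF m_lt, of "\<phi>(m := ket1 (f x))" "f x"] by auto
  then show "\<exists>\<psi>. apply_op (m + 1 + n_anc) noclean_circuit (ket ?z) =
      (\<lambda>y. if length y = m + 1 + n_anc \<and> y ! m = f x then \<psi> (take m y @ drop (m + 1) y) else 0)"
    using result by (auto simp: N_def)
qed

lemma clean_acq:
  assumes d: "1 \<le> d"
  shows "acq_circuit N (8 * d) 1 clean_circuit"
  unfolding clean_circuit_def
proof (rule acq_of_segs)
  show "length clean_segs = 8 * d + 1" using length_compute_segs[OF d] by (simp add: clean_segs_def)
  have "alternating 1 (rev (map seg_inv compute_segs))"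
    using alternating_rev[OF alternating_compute_segs[OF d]] length_compute_segs[OF d] by simp
  then have "alternating (1 + 4 * d) (rev (map seg_inv compute_segs))"
    by (simp only: alternating_shift_even[of "4 * d" 1] even_mult_iff even_numeral simp_thms)
  then show "alternating 0 clean_segs" unfolding clean_segs_def
    by (intro alternating_append[OF alternating_compute_segs[OF d]] alternating_append)
       (simp_all add: alternating_Cons length_compute_segs[OF d] add.commute)
  show "\<forall>s\<in>set clean_segs. seg_ok N s" using clean_segs_ok by blast
qed

lemma uncompute_gates_ok:
  "\<forall>g\<in>set (concat (map seg_gates (rev (map seg_inv forward_segs)))). m \<notin> gate_qubits g \<and> gate_ok N g"
proof
  fix g assume "g \<in> set (concat (map seg_gates (rev (map seg_inv forward_segs))))"
  then obtain s where s: "s \<in> set forward_segs" "g \<in> set (seg_gates (seg_inv s))" by auto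
  show "m \<notin> gate_qubits g \<and> gate_ok N g" using seg_inv_gates_avoid[of N s m] forward_segs_ok[OF s(1)] s(2) by blast
qed

lemma clean_computes:
  assumes d: "1 \<le> d" and f: "\<forall>x. length x = m \<longrightarrow> tc_eval x (gs, outw) = f x"
  shows "cleanly_computes m n_anc clean_circuit f"
  unfolding cleanly_computes_def
proof (intro allI impI)
  fix x :: "bool list" and b assume x: "length x = m"
  let ?z = "x @ [b] @ replicate n_anc False"
  let ?F = "concat (map seg_gates forward_segs)" and ?R = "concat (map seg_gates (rev (map seg_inv forward_segs)))"
  have z: "length ?z = N" using x by (simp add: N_def)
  obtain \<phi> where F: "gates_apply N ?F (ket ?z) = prod_state N \<phi>" "\<phi> (wire_q outw) = ket1 (f x)"
    using forward_prod_state[OF d x] f x by metis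
  have "gates_apply N ?R (gates_apply N ?F (ket ?z)) = ket ?z"
    by (rule gates_apply_segs_inv) (use forward_segs_ok state_on_ket[OF z] in auto)
  then have undo: "gates_apply N ?R (prod_state N \<phi>) = ket ?z" using F(1) by simp
  have "apply_op N clean_circuit (ket ?z) = gates_apply N ?R (gate_apply N copy_out (prod_state N \<phi>))"
    unfolding clean_circuit_def using clean_segs_ok F(1) state_on_ket[OF z]
    by (subst apply_seq_op_segs) (auto simp: seg_gates_clean_segs)
  also have "gate_apply N copy_out (prod_state N \<phi>) = (if f x then flip m (prod_state N \<phi>) else prod_state N \<phi>)"
    unfolding copy_out_def
    by (rule prod_state_CX_flip[where \<phi>=\<phi> and c="wire_q outw" and t=m and a="f x", OF wire_q_lt[OF wf_out] m_lt wire_q_neq(1)[of outw] F(2)])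
  also have "gates_apply N ?R \<dots> = (if f x then flip m (ket ?z) else ket ?z)"
    using gates_apply_flip[OF uncompute_gates_ok] undo by simp
  also have "\<dots> = ket (x @ [f x \<noteq> b] @ replicate n_anc False)"
    using ket_flip[OF x, of b "replicate n_anc False"] by auto
  finally show "apply_op (m + 1 + n_anc) clean_circuit (ket ?z) = ket (x @ [f x \<noteq> b] @ replicate n_anc False)"
    by (simp add: N_def)
qed


end

lemma tc_wf_depth_pos: "tc_wf 0 d C \<Longrightarrow> 1 \<le> d"
  unfolding tc_wf_def by (cases "fst C") force+

lemma tc_noncleanly_acq:
  assumes "tc_wf m d C" "1 \<le> d" "\<forall>x. length x = m \<longrightarrow> tc_eval x C = f x"
  shows "\<exists>U. acq_circuit (m + 1 + anc_count (m + length (fst C))) (4 * d) 1 U \<and>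
             noncleanly_computes m (anc_count (m + length (fst C))) U f"
proof -
  interpret tc_construction m "fst C" "snd C" d
    using assms(1) by unfold_locales simp
  show ?thesis
    using noclean_acq noclean_computes assms(2,3) by (auto simp: N_def n_anc_def W_def G_def)
qed

lemma tc_cleanly_acq:
  assumes "tc_wf m d C" "1 \<le> d" "\<forall>x. length x = m \<longrightarrow> tc_eval x C = f x"
  shows "\<exists>U. acq_circuit (m + 1 + anc_count (m + length (fst C))) (8 * d) 1 U \<and>
             cleanly_computes m (anc_count (m + length (fst C))) U f"
proof -
  interpret tc_construction m "fst C" "snd C" d
    using assms(1) by unfold_locales simp
  show ?thesis
    using clean_acq clean_computes assms(2,3) by (auto simp: N_def n_anc_def W_def G_def)
qed

theorem lemma6p3:
  fixes f :: "bool list \<Rightarrow> bool" and d :: nat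
  assumes "tc0_depth d f"
  shows "noncleanly_in_ACQ (4 * d) f \<and> cleanly_in_ACQ (8 * d) f"
proof -
  obtain a where circuits: "\<forall>m. \<exists>C. tc_wf m d C \<and> length (fst C) \<le> a * m ^ a + a \<and>
      (\<forall>x. length x = m \<longrightarrow> tc_eval x C = f x)"
    using assms unfolding tc0_depth_def by blast
  have d: "1 \<le> d" using circuits tc_wf_depth_pos by blast
  obtain c where c: "\<forall>m. anc_count (m + (a * m ^ a + a)) \<le> c * m ^ c + c"
    using anc_count_poly_bound by blast
  have circuit: "\<exists>C. tc_wf m d C \<and> anc_count (m + length (fst C)) \<le> c * m ^ c + c \<and>
      (\<forall>x. length x = m \<longrightarrow> tc_eval x C = f x)" for m
  proof -
    obtain C where C: "tc_wf m d C" "length (fst C) \<le> a * m ^ a + a" "\<forall>x. length x = m \<longrightarrow> tc_eval x C = f x"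
      using circuits by blast
    have "anc_count (m + length (fst C)) \<le> anc_count (m + (a * m ^ a + a))"
      using C(2) by (intro anc_count_mono) simp
    then show ?thesis using C c by (meson le_trans)
  qed
  have "\<exists>n U. n \<le> c * m ^ c + c \<and> acq_circuit (m + 1 + n) (4 * d) 1 U \<and> noncleanly_computes m n U f" for m
    using circuit[of m] tc_noncleanly_acq d by blast
  moreover have "\<exists>n U. n \<le> c * m ^ c + c \<and> acq_circuit (m + 1 + n) (8 * d) 1 U \<and> cleanly_computes m n U f" for m
    using circuit[of m] tc_cleanly_acq d by blast
  ultimately show ?thesis unfolding noncleanly_in_ACQ_def cleanly_in_ACQ_def by blast
qed

end
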